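(* Let $K$ be a flat virtual knot diagram (one component) whose oriented chord diagram does not admit a filamentation. Then $K$ is not flat equivalent to the trivial flat diagram (an embedded circle with no crossings).
   Context: A flat virtual knot diagram is a generic immersion of an oriented circle in the plane in which each double point is labelled either real (flat, no over/under information) or virtual. Two such diagrams are flat equivalent if they are related by planar isotopy and finitely many flat Reidemeister moves: Reidemeister moves I, II, III with all crossings real and over/under information ignored, the same three moves with all crossings virtual, and the mixed move in which a strand containing two consecutive virtual crossings passes across a real crossing. The oriented chord diagram (OCD) of a flat virtual knot diagram $K$: take a circle $C$, oriented counterclockwise, parametrizing $K$; for each real crossing draw a chord joining the two preimages of that crossing (virtual crossings give no chords). Label each chord endpoint $+$ or $-$: viewing the strand through that endpoint in the direction of its orientation, if the other strand of the crossing passes from right to left label it $+$, otherwise $-$. Each chord $x$ has endpoints $X^+$ and $X^-$. Filamentations. Let ${\mathcal D}$ be an OCD on the circle $C=\partial\Delta$, $\Delta$ a disk. A pairing is a partition of the set of chords into unordered pairs $\{x,y\}$ with $x\neq y$ and self-pairs $(x,x)$. A choice of filaments assigns to each self-pair $(x,x)$ one curve (monofilament) from $X^-$ to $X^+$, and to each pair $(x,y)$ with $x\ne y$ two curves (bifilaments), one from $Y^-$ to $X^+$ and one from $X^-$ to $Y^+$. Each filament is a generically immersed arc in $\Delta$ with the indicated endpoints on $C$ and interior in the interior of $\Delta$, oriented from its $-$ endpoint to its $+$ endpoint; all filaments are in general position. For distinct filaments $\alpha,\gamma$, $\alpha\cdot\gamma$ is the sum over points of $\alpha\cap\gamma$ of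 $+1$ if, looking along $\alpha$, $\gamma$ passes from right to left, and $-1$ otherwise. For a pair $P$ with set of filaments $F(P)$, $I(P)=\sum_{\beta\in F(P)}\sum_{\gamma\notin F(P)}\beta\cdot\gamma$. A filamentation on ${\mathcal D}$ is a pairing with a choice of filaments such that $I(P)=0$ for every pair $P$; ${\mathcal D}$ admits a filamentation if one exists. *)

theory Defs
  imports "HOL-Analysis.Analysis"
begin

text \<open>An endpoint of a chord is a pair (chord label, sign), sign True meaning +.
  An OCD is the cyclic list of chord endpoints in the order in which they are met
  along the counterclockwise oriented circle C (list taken up to rotation).\<close>

type_synonym endpoint = "nat \<times> bool"
type_synonym ocd = "endpoint list"

definition wf_ocd :: "ocd \<Rightarrow> bool" where
  "wf_ocd w \<longleftrightarrow> distinct w \<and> (\<forall>c b. (c, b) \<in> set w \<longrightarrow> (c, \<not> b) \<in> set w)"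

definition chords :: "ocd \<Rightarrow> nat set" where
  "chords w = fst ` set w"

definition tsg :: "int \<Rightarrow> bool" where
  "tsg k \<longleftrightarrow> k > 0"

text \<open>Local pictures of the three strands of a real Reidemeister III triangle.
  Chord x joins strands 1,2, chord y strands 1,3, chord z strands 2,3.
  Parameters e1 e2 e3 s (each 1 or -1) encode the order of the crossings
  on each strand and the orientation of the triangle.\<close>

definition r3_seg1 :: "nat \<Rightarrow> nat \<Rightarrow> nat \<Rightarrow> int \<Rightarrow> int \<Rightarrow> int \<Rightarrow> int \<Rightarrow> ocd" where
  "r3_seg1 x y z e1 e2 e3 s =
     (if e1 = 1 then [(y, tsg (- e1 * e3 * s)), (x, tsg (e1 * e2 * s))]
      else [(x, tsg (e1 * e2 * s)), (y, tsg (- e1 * e3 * s))])"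

definition r3_seg2 :: "nat \<Rightarrow> nat \<Rightarrow> nat \<Rightarrow> int \<Rightarrow> int \<Rightarrow> int \<Rightarrow> int \<Rightarrow> ocd" where
  "r3_seg2 x y z e1 e2 e3 s =
     (if e2 = 1 then [(x, tsg (- e1 * e2 * s)), (z, tsg (e2 * e3 * s))]
      else [(z, tsg (e2 * e3 * s)), (x, tsg (- e1 * e2 * s))])"

definition r3_seg3 :: "nat \<Rightarrow> nat \<Rightarrow> nat \<Rightarrow> int \<Rightarrow> int \<Rightarrow> int \<Rightarrow> int \<Rightarrow> ocd" where
  "r3_seg3 x y z e1 e2 e3 s =
     (if e3 = 1 then [(z, tsg (- e2 * e3 * s)), (y, tsg (e3 * e1 * s))]
      else [(y, tsg (e3 * e1 * s)), (z, tsg (- e2 * e3 * s))])"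

inductive flat_move :: "ocd \<Rightarrow> ocd \<Rightarrow> bool" where
  rotate: "flat_move w (rotate1 w)"
| relabel: "inj_on f (chords w) \<Longrightarrow> flat_move w (map (\<lambda>(c, b). (f c, b)) w)"
| R1: "c \<notin> chords (u @ v) \<Longrightarrow> flat_move (u @ v) (u @ [(c, b), (c, \<not> b)] @ v)"
| R2_par: "p \<noteq> q \<Longrightarrow> p \<notin> chords (u @ v @ t) \<Longrightarrow> q \<notin> chords (u @ v @ t) \<Longrightarrow>
     flat_move (u @ v @ t) (u @ [(p, b), (q, \<not> b)] @ v @ [(p, \<not> b), (q, b)] @ t)"
| R2_anti: "p \<noteq> q \<Longrightarrow> p \<notin> chords (u @ v @ t) \<Longrightarrow> q \<notin> chords (u @ v @ t) \<Longrightarrow>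
     flat_move (u @ v @ t) (u @ [(p, b), (q, \<not> b)] @ v @ [(q, b), (p, \<not> b)] @ t)"
| R3: "x \<noteq> y \<Longrightarrow> x \<noteq> z \<Longrightarrow> y \<noteq> z \<Longrightarrow>
     e1 \<in> {1, -1} \<Longrightarrow> e2 \<in> {1, -1} \<Longrightarrow> e3 \<in> {1, -1} \<Longrightarrow> s \<in> {1, -1} \<Longrightarrow>
     flat_move (r3_seg1 x y z e1 e2 e3 s @ u @ r3_seg2 x y z e1 e2 e3 s @ v @ r3_seg3 x y z e1 e2 e3 s @ t)
               (rev (r3_seg1 x y z e1 e2 e3 s) @ u @ rev (r3_seg2 x y z e1 e2 e3 s) @ v
                  @ rev (r3_seg3 x y z e1 e2 e3 s) @ t)"

definition flat_equiv :: "ocd \<Rightarrow> ocd \<Rightarrow> bool" where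
  "flat_equiv = equivclp flat_move"

definition ep_pos :: "ocd \<Rightarrow> endpoint \<Rightarrow> complex" where
  "ep_pos w e = cis (2 * pi * real (THE k. k < length w \<and> w ! k = e) / real (length w))"

definition cross :: "complex \<Rightarrow> complex \<Rightarrow> real" where
  "cross u v = Im (cnj u * v)"

definition dv :: "(real \<Rightarrow> complex) \<Rightarrow> real \<Rightarrow> complex" where
  "dv \<gamma> t = vector_derivative \<gamma> (at t within {0..1})"

definition filament_arc :: "(real \<Rightarrow> complex) \<Rightarrow> complex \<Rightarrow> complex \<Rightarrow> bool" where
  "filament_arc \<gamma> a b \<longleftrightarrow> \<gamma> C1_differentiable_on {0..1} \<and> (\<forall>t\<in>{0..1}. dv \<gamma> t \<noteq> 0)
     \<and> \<gamma> 0 = a \<and> \<gamma> 1 = b \<and> (\<forall>t\<in>{0<..<1}. norm (\<gamma> t) < 1)"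

text \<open>Generic immersion and general position of the family: only finitely many
  double points, all transverse, and no triple points.\<close>
definition general_position :: "nat set \<Rightarrow> (nat \<Rightarrow> real \<Rightarrow> complex) \<Rightarrow> bool" where
  "general_position X \<Gamma> \<longleftrightarrow>
     finite {p. 2 \<le> card {(i, t). i \<in> X \<and> t \<in> {0..1} \<and> \<Gamma> i t = p}
                 \<or> infinite {(i, t). i \<in> X \<and> t \<in> {0..1} \<and> \<Gamma> i t = p}} \<and>
     (\<forall>p. finite {(i, t). i \<in> X \<and> t \<in> {0..1} \<and> \<Gamma> i t = p}
          \<and> card {(i, t). i \<in> X \<and> t \<in> {0..1} \<and> \<Gamma> i t = p} \<le> 2) \<and>
     (\<forall>i\<in>X. \<forall>j\<in>X. \<forall>s\<in>{0..1}. \<forall>t\<in>{0..1}.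
        (i, s) \<noteq> (j, t) \<and> \<Gamma> i s = \<Gamma> j t \<longrightarrow> cross (dv (\<Gamma> i) s) (dv (\<Gamma> j) t) \<noteq> 0)"

text \<open>Algebraic intersection number alpha . gamma: +1 at a crossing where, looking
  along alpha, gamma passes from right to left, -1 otherwise.\<close>
definition inum :: "(real \<Rightarrow> complex) \<Rightarrow> (real \<Rightarrow> complex) \<Rightarrow> int" where
  "inum \<alpha> \<gamma> = (\<Sum>(s, t) \<in> {(s, t). s \<in> {0..1} \<and> t \<in> {0..1} \<and> \<alpha> s = \<gamma> t}.
                   (if cross (dv \<alpha> s) (dv \<gamma> t) > 0 then 1 else -1))"

text \<open>A pairing is an involution pi on the chords (pi x = x: self-pair (x,x)).
  The filament Gamma x runs from the - endpoint of pi x to the + endpoint of x;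
  so a self-pair gets the monofilament X^- to X^+, and a pair (x,y) gets the
  bifilaments Y^- to X^+ (Gamma x) and X^- to Y^+ (Gamma y).\<close>
definition is_pairing :: "nat set \<Rightarrow> (nat \<Rightarrow> nat) \<Rightarrow> bool" where
  "is_pairing X \<pi> \<longleftrightarrow> (\<forall>x\<in>X. \<pi> x \<in> X \<and> \<pi> (\<pi> x) = x)"

definition is_filamentation :: "ocd \<Rightarrow> (nat \<Rightarrow> nat) \<Rightarrow> (nat \<Rightarrow> real \<Rightarrow> complex) \<Rightarrow> bool" where
  "is_filamentation w \<pi> \<Gamma> \<longleftrightarrow>
     is_pairing (chords w) \<pi> \<and>
     (\<forall>x\<in>chords w. filament_arc (\<Gamma> x) (ep_pos w (\<pi> x, False)) (ep_pos w (x, True))) \<and>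
     general_position (chords w) \<Gamma> \<and>
     (\<forall>x\<in>chords w. (\<Sum>\<beta>\<in>{x, \<pi> x}. \<Sum>\<gamma>\<in>chords w - {x, \<pi> x}. inum (\<Gamma> \<beta>) (\<Gamma> \<gamma>)) = 0)"

definition admits_filamentation :: "ocd \<Rightarrow> bool" where
  "admits_filamentation w \<longleftrightarrow> (\<exists>\<pi> \<Gamma>. is_filamentation w \<pi> \<Gamma>)"

end

theory Submission
  imports Defs
begin

text \<open>
  Write \<open>ind x\<close> for the sum of the signs of the endpoints met when going along \<open>C\<close> from
  \<open>X\<^sup>-\<close> to \<open>X\<^sup>+\<close>. The flat moves preserve the multiset of chord indices up to negation:
  R1 creates a chord of index 0, R2 two chords of opposite indices, and R3, rotation and
  relabelling change no index. The trivial diagram has no chords, so an OCD flat equivalent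
  to it has \<open>#{x. ind x = k} = #{x. ind x = -k}\<close> for all \<open>k\<close>.

  Conversely, such an OCD admits a filamentation: pair every chord \<open>x\<close> with a chord \<open>\<pi> x\<close>
  of opposite index (itself if \<open>ind x = 0\<close>) and let the filament ending at \<open>X\<^sup>+\<close> be the
  curve \<open>(1 - c\<^sub>x (\<phi> - a) (b - \<phi>)) e\<^sup>i\<^sup>\<phi>\<close>, where the angle \<open>\<phi>\<close> runs linearly from the angle
  \<open>a\<close> of \<open>(\<pi> x)\<^sup>-\<close> to the angle \<open>b\<close> of \<open>X\<^sup>+\<close>. For generic small \<open>c\<^sub>x > 0\<close> these arcs are in
  general position, and the intersection number of two of them is \<open>\<plusminus>1\<close> or 0 according to how
  their endpoints interleave on \<open>C\<close>. Hence the intersection number of one filament with all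
  others is minus the sum of the signs strictly between its endpoints, and for a pair the two
  filaments together give \<open>I(P) = -(ind x + ind (\<pi> x)) = 0\<close>.
\<close>

section \<open>Chord indices\<close>

definition endpoint_sign :: "endpoint \<Rightarrow> int" where
  "endpoint_sign e = (if snd e then 1 else -1)"

definition sign_sum :: "ocd \<Rightarrow> int" where
  "sign_sum l = sum_list (map endpoint_sign l)"

definition sign_prefix :: "ocd \<Rightarrow> endpoint \<Rightarrow> int" where
  "sign_prefix w e = sign_sum (takeWhile (\<lambda>a. a \<noteq> e) w)"

text \<open>This is \<open>ind x\<close> (both ends excluded) for a well-formed OCD, where the signs of all endpoints
  add up to 0.\<close>
definition chord_index :: "ocd \<Rightarrow> nat \<Rightarrow> int" where
  "chord_index w x = sign_prefix w (x, True) - sign_prefix w (x, False) + 1"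

definition symmetric_fibers :: "'a set \<Rightarrow> ('a \<Rightarrow> int) \<Rightarrow> bool" where
  "symmetric_fibers X f \<longleftrightarrow> (\<forall>k. card {x \<in> X. f x = k} = card {x \<in> X. f x = - k})"

abbreviation symmetric_indices :: "ocd \<Rightarrow> bool" where
  "symmetric_indices w \<equiv> symmetric_fibers (chords w) (chord_index w)"

lemma sign_sum_Nil [simp]: "sign_sum [] = 0"
  by (simp add: sign_sum_def)

lemma sign_sum_Cons [simp]: "sign_sum (a # l) = endpoint_sign a + sign_sum l"
  by (simp add: sign_sum_def)

lemma sign_sum_append [simp]: "sign_sum (l1 @ l2) = sign_sum l1 + sign_sum l2"
  by (simp add: sign_sum_def)

lemma sign_sum_rev [simp]: "sign_sum (rev l) = sign_sum l"
  by (simp add: sign_sum_def sum_list_rev rev_map[symmetric])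

lemma endpoint_sign_simps [simp]:
  "endpoint_sign (c, True) = 1" "endpoint_sign (c, False) = -1"
  "endpoint_sign (c, b) = (if b then 1 else -1)"
  by (simp_all add: endpoint_sign_def)

lemma sign_prefix_Nil [simp]: "sign_prefix [] e = 0"
  by (simp add: sign_prefix_def)

lemma sign_prefix_Cons:
  "sign_prefix (a # l) e = (if a = e then 0 else endpoint_sign a + sign_prefix l e)"
  by (simp add: sign_prefix_def)

lemma sign_prefix_append:
  "sign_prefix (l1 @ l2) e = (if e \<in> set l1 then sign_prefix l1 e else sign_sum l1 + sign_prefix l2 e)"
proof (cases "e \<in> set l1")
  case True then show ?thesis unfolding sign_prefix_def by (simp add: takeWhile_append1)
next
  case False then show ?thesis unfolding sign_prefix_def by (subst takeWhile_append2) auto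
qed

lemma finite_chords [simp]: "finite (chords w)"
  by (simp add: chords_def)

lemma chords_Nil [simp]: "chords [] = {}"
  by (auto simp: chords_def)

lemma chords_Cons [simp]: "chords (e # b) = insert (fst e) (chords b)"
  by (auto simp: chords_def)

lemma chords_append [simp]: "chords (a @ b) = chords a \<union> chords b"
  by (auto simp: chords_def)

lemma chords_rev [simp]: "chords (rev a) = chords a"
  by (auto simp: chords_def)

lemma chordsI: "(c, b) \<in> set w \<Longrightarrow> c \<in> chords w"
  by (force simp: chords_def)

lemma endpoint_notin_set: "c \<notin> chords w \<Longrightarrow> (c, b) \<notin> set w"
  using chordsI by blast

lemma wf_ocd_endpoint_in_set:
  assumes "wf_ocd w" "x \<in> chords w"
  shows "(x, b) \<in> set w"
proof -
  obtain b0 where b0: "(x, b0) \<in> set w" using assms(2) by (auto simp: chords_def)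
  moreover have "(x, \<not> b0) \<in> set w" using b0 assms(1) by (simp add: wf_ocd_def)
  ultimately show ?thesis by (cases b; cases b0) auto
qed

lemma sign_sum_eq_0:
  assumes "wf_ocd w"
  shows "sign_sum w = 0"
proof -
  define flip where "flip = (\<lambda>(c::nat, b::bool). (c, \<not> b))"
  have "flip ` set w \<subseteq> set w" using assms by (auto simp: wf_ocd_def flip_def)
  moreover have "inj flip" by (auto simp: inj_on_def flip_def)
  ultimately have bij: "bij_betw flip (set w) (set w)"
    by (simp add: bij_betw_def endo_inj_surj inj_on_subset[of flip UNIV])
  have s: "sign_sum w = sum endpoint_sign (set w)"
    using assms by (simp add: wf_ocd_def sign_sum_def sum_list_distinct_conv_sum_set)
  have "sum endpoint_sign (set w) = sum (endpoint_sign \<circ> flip) (set w)"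
    using sum.reindex_bij_betw[OF bij, of endpoint_sign] by simp
  also have "\<dots> = - sum endpoint_sign (set w)"
    unfolding sum_negf[symmetric] by (rule sum.cong) (auto simp: flip_def endpoint_sign_def)
  finally show ?thesis using s by simp
qed

lemma card_fiber_insert:
  assumes "finite X" "p \<notin> X"
  shows "card {x \<in> insert p X. f x = k} = card {x \<in> X. f x = k} + (if f p = k then 1 else 0)"
proof -
  have "{x \<in> insert p X. f x = k} = (if f p = k then insert p {x \<in> X. f x = k} else {x \<in> X. f x = k})"
    by auto
  then show ?thesis using assms by simp
qed

lemma symmetric_fibers_cong:
  assumes "\<And>x. x \<in> X \<Longrightarrow> f x = g x"
  shows "symmetric_fibers X f \<longleftrightarrow> symmetric_fibers X g"
proof -
  have "\<And>k. {x \<in> X. f x = k} = {x \<in> X. g x = k}" using assms by auto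
  then show ?thesis unfolding symmetric_fibers_def by simp
qed

lemma symmetric_fibers_image:
  assumes "inj_on h X"
  shows "symmetric_fibers (h ` X) g \<longleftrightarrow> symmetric_fibers X (g \<circ> h)"
proof -
  have "\<And>k. {y \<in> h ` X. g y = k} = h ` {x \<in> X. g (h x) = k}" by auto
  moreover have "\<And>k. inj_on h {x \<in> X. g (h x) = k}" using assms by (rule inj_on_subset) auto
  ultimately have "\<And>k. card {y \<in> h ` X. g y = k} = card {x \<in> X. (g \<circ> h) x = k}"
    by (simp add: card_image)
  then show ?thesis unfolding symmetric_fibers_def by simp
qed

lemma symmetric_fibers_insert_zero:
  assumes "finite X" "p \<notin> X" "f p = 0"
  shows "symmetric_fibers (insert p X) f \<longleftrightarrow> symmetric_fibers X f"
proof -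
  have "\<And>k. card {x \<in> insert p X. f x = k} = card {x \<in> X. f x = k} + (if f p = k then 1 else 0)"
    using assms(1,2) by (rule card_fiber_insert)
  then show ?thesis unfolding symmetric_fibers_def using assms(3) by auto
qed

lemma symmetric_fibers_insert_opposite:
  assumes "finite X" "p \<notin> X" "q \<notin> X" "p \<noteq> q" "f p = - f q"
  shows "symmetric_fibers (insert p (insert q X)) f \<longleftrightarrow> symmetric_fibers X f"
proof -
  have "card {x \<in> insert p (insert q X). f x = k}
      = card {x \<in> X. f x = k} + (if f q = k then 1 else 0) + (if f p = k then 1 else 0)" for k
  proof -
    have "card {x \<in> insert p (insert q X). f x = k}
        = card {x \<in> insert q X. f x = k} + (if f p = k then 1 else 0)"
      by (rule card_fiber_insert) (use assms in auto)
    also have "card {x \<in> insert q X. f x = k} = card {x \<in> X. f x = k} + (if f q = k then 1 else 0)"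
      by (rule card_fiber_insert) fact+
    finally show ?thesis .
  qed
  then show ?thesis unfolding symmetric_fibers_def using assms(5) by auto
qed

lemma opposite_pairing_exists:
  fixes f :: "'a \<Rightarrow> int"
  assumes fin: "finite X" and sym: "symmetric_fibers X f"
  obtains p where "\<And>x. x \<in> X \<Longrightarrow> p x \<in> X" "\<And>x. x \<in> X \<Longrightarrow> p (p x) = x"
    "\<And>x. x \<in> X \<Longrightarrow> f (p x) = - f x"
proof -
  define S where "S = (\<lambda>k. {x \<in> X. f x = k})"
  have "\<exists>g. bij_betw g (S k) (S (- k))" for k
  proof -
    have "finite (S k)" "finite (S (-k))" using fin unfolding S_def by auto
    moreover have "card (S k) = card (S (-k))" using sym unfolding S_def symmetric_fibers_def by simp
    ultimately show "\<exists>g. bij_betw g (S k) (S (- k))" by (rule finite_same_card_bij)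
  qed
  then obtain G where G: "\<And>k. bij_betw (G k) (S k) (S (- k))" by metis
  define p where "p = (\<lambda>x. if f x > 0 then G (f x) x
    else if f x < 0 then inv_into (S (- f x)) (G (- f x)) x else x)"
  have "p x \<in> X \<and> p (p x) = x \<and> f (p x) = - f x" if x: "x \<in> X" for x
  proof (cases "f x > 0")
    case True
    let ?k = "f x"
    have xs: "x \<in> S ?k" using x unfolding S_def by simp
    have px: "p x = G ?k x" unfolding p_def using True by simp
    have "G ?k x \<in> S (- ?k)" using G[of ?k] xs by (auto simp: bij_betw_def)
    then have fpx: "f (p x) = - ?k" and pX: "p x \<in> X" unfolding px S_def by auto
    have "p (p x) = inv_into (S ?k) (G ?k) (G ?k x)" using fpx True px by (simp add: p_def)
    also have "\<dots> = x" using G[of ?k] xs by (simp add: bij_betw_def inv_into_f_f)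
    finally show ?thesis using fpx pX by simp
  next
    case False
    show ?thesis
    proof (cases "f x < 0")
      case True
      let ?k = "- f x"
      have xs: "x \<in> S (- ?k)" using x unfolding S_def by simp
      have px: "p x = inv_into (S ?k) (G ?k) x" unfolding p_def using True by simp
      have im: "G ?k ` S ?k = S (- ?k)" using G[of ?k] by (simp add: bij_betw_def)
      have "p x \<in> S ?k" unfolding px using xs im by (metis inv_into_into)
      then have fpx: "f (p x) = ?k" and pX: "p x \<in> X" unfolding S_def by auto
      have "p (p x) = G ?k (p x)" using fpx True by (simp add: p_def)
      also have "\<dots> = x" unfolding px using xs im by (simp add: f_inv_into_f)
      finally show ?thesis using fpx pX by simp
    next
      case False2: False
      then show ?thesis unfolding p_def using x False by simp
    qed
  qed
  then show ?thesis using that by blast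
qed

section \<open>Invariance under flat moves\<close>

lemma invariants_rotate1:
  shows "wf_ocd w \<longleftrightarrow> wf_ocd (rotate1 w)"
    and "wf_ocd w \<Longrightarrow> symmetric_indices w \<longleftrightarrow> symmetric_indices (rotate1 w)"
proof -
  show "wf_ocd w \<longleftrightarrow> wf_ocd (rotate1 w)" by (simp add: wf_ocd_def)
  assume wf: "wf_ocd w"
  show "symmetric_indices w \<longleftrightarrow> symmetric_indices (rotate1 w)"
  proof (cases w)
    case Nil then show ?thesis by simp
  next
    case (Cons e l)
    have d: "distinct (e # l)" using wf Cons by (simp add: wf_ocd_def)
    have sl: "sign_sum l = - endpoint_sign e" using sign_sum_eq_0[OF wf] Cons by simp
    have "chord_index (e # l) x = chord_index (l @ [e]) x" if x: "x \<in> chords (e # l)" for x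
    proof -
      have "(x, True) \<in> set (e # l)" "(x, False) \<in> set (e # l)"
        using wf_ocd_endpoint_in_set[OF wf, of x] x Cons by auto
      then show ?thesis
        using d sl by (cases "e = (x, True)"; cases "e = (x, False)")
          (auto simp: chord_index_def sign_prefix_append sign_prefix_Cons)
    qed
    then have "symmetric_indices (e # l) \<longleftrightarrow> symmetric_fibers (chords (e # l)) (chord_index (l @ [e]))"
      by (rule symmetric_fibers_cong)
    moreover have "chords (l @ [e]) = chords (e # l)" by auto
    ultimately show ?thesis using Cons by simp
  qed
qed

lemma sign_prefix_map:
  assumes "inj_on F (set w)" "e \<in> set w" "\<And>a. snd (F a) = snd a"
  shows "sign_prefix (map F w) (F e) = sign_prefix w e"
  using assms(1,2)
proof (induction w)
  case Nil then show ?case by simp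
next
  case (Cons a l)
  show ?case
  proof (cases "a = e")
    case True then show ?thesis by (simp add: sign_prefix_Cons)
  next
    case False
    then have "F a \<noteq> F e" using Cons.prems by (meson inj_on_contraD list.set_intros(1))
    moreover have "endpoint_sign (F a) = endpoint_sign a" using assms(3) by (simp add: endpoint_sign_def)
    ultimately show ?thesis using Cons False by (simp add: sign_prefix_Cons inj_on_insert)
  qed
qed

lemma invariants_relabel:
  assumes inj: "inj_on f (chords w)"
  defines "F \<equiv> \<lambda>(c, b). (f c, b)"
  shows "wf_ocd w \<longleftrightarrow> wf_ocd (map F w)"
    and "wf_ocd w \<Longrightarrow> symmetric_indices w \<longleftrightarrow> symmetric_indices (map F w)"
proof -
  have injF: "inj_on F (set w)"
    unfolding inj_on_def F_def
  proof (clarsimp)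
    fix a b a' b' assume "(a, b) \<in> set w" "(a', b') \<in> set w" "f a = f a'"
    then show "a = a'" using inj chordsI by (metis inj_onD)
  qed
  show "wf_ocd w \<longleftrightarrow> wf_ocd (map F w)"
  proof
    assume wf: "wf_ocd w"
    show "wf_ocd (map F w)" unfolding wf_ocd_def
    proof (intro conjI allI impI)
      show "distinct (map F w)" using wf injF by (simp add: wf_ocd_def distinct_map)
      fix c b assume "(c, b) \<in> set (map F w)"
      then obtain c0 where "(c0, b) \<in> set w" "c = f c0" by (force simp: F_def)
      then have "(c0, \<not> b) \<in> set w" "c = f c0" using wf by (simp_all add: wf_ocd_def)
      then show "(c, \<not> b) \<in> set (map F w)" by (force simp: F_def)
    qed
  next
    assume wf: "wf_ocd (map F w)"
    show "wf_ocd w" unfolding wf_ocd_def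
    proof (intro conjI allI impI)
      show "distinct w" using wf by (simp add: wf_ocd_def distinct_map)
      fix c b assume cb: "(c, b) \<in> set w"
      then have "(f c, b) \<in> set (map F w)" by (force simp: F_def)
      then have "(f c, \<not> b) \<in> set (map F w)" using wf by (simp add: wf_ocd_def)
      then obtain c0 where c0: "(c0, \<not> b) \<in> set w" "f c0 = f c" by (force simp: F_def)
      then have "c0 = c" using inj cb chordsI by (metis inj_onD)
      then show "(c, \<not> b) \<in> set w" using c0 by simp
    qed
  qed
  assume wf: "wf_ocd w"
  have "chord_index w x = (chord_index (map F w) \<circ> f) x" if x: "x \<in> chords w" for x
  proof -
    have "\<And>a. snd (F a) = snd a" by (simp add: F_def split_def)
    then have "sign_prefix (map F w) (F (x, b)) = sign_prefix w (x, b)" for b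
      using sign_prefix_map[OF injF] wf_ocd_endpoint_in_set[OF wf x] by blast
    from this[of True] this[of False] show ?thesis by (simp add: chord_index_def F_def)
  qed
  then have "symmetric_indices w \<longleftrightarrow> symmetric_fibers (chords w) (chord_index (map F w) \<circ> f)"
    by (rule symmetric_fibers_cong)
  also have "\<dots> \<longleftrightarrow> symmetric_fibers (f ` chords w) (chord_index (map F w))"
    using symmetric_fibers_image[OF inj] by simp
  also have "f ` chords w = chords (map F w)"
    by (force simp: chords_def F_def image_iff)
  finally show "symmetric_indices w \<longleftrightarrow> symmetric_indices (map F w)" .
qed

lemma wf_ocd_add_closed_chords:
  assumes "set w = set m \<union> set l" "distinct w \<longleftrightarrow> distinct l"
    and "\<forall>c b. (c, b) \<in> set m \<longrightarrow> (c, \<not> b) \<in> set m" "chords m \<inter> chords l = {}"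
  shows "wf_ocd w \<longleftrightarrow> wf_ocd l"
proof
  assume wf: "wf_ocd w"
  show "wf_ocd l" unfolding wf_ocd_def
  proof (intro conjI allI impI)
    show "distinct l" using wf assms(2) by (simp add: wf_ocd_def)
    fix c b assume cb: "(c, b) \<in> set l"
    then have "(c, \<not> b) \<in> set m \<union> set l" using wf assms(1) by (auto simp: wf_ocd_def)
    moreover have "(c, \<not> b) \<notin> set m" using assms(4) cb by (auto dest: chordsI)
    ultimately show "(c, \<not> b) \<in> set l" by blast
  qed
next
  assume "wf_ocd l"
  then show "wf_ocd w" using assms(1-3) by (auto simp: wf_ocd_def)
qed

lemma invariants_R1:
  assumes c: "c \<notin> chords (u @ v)"
  shows "wf_ocd (u @ v) \<longleftrightarrow> wf_ocd (u @ [(c, b), (c, \<not> b)] @ v)"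
    and "wf_ocd (u @ v) \<Longrightarrow> symmetric_indices (u @ v) \<longleftrightarrow> symmetric_indices (u @ [(c, b), (c, \<not> b)] @ v)"
proof -
  let ?b = "u @ [(c, b), (c, \<not> b)] @ v"
  have n: "\<And>b. (c, b) \<notin> set u" "\<And>b. (c, b) \<notin> set v"
    using endpoint_notin_set[OF c] by auto
  show "wf_ocd (u @ v) \<longleftrightarrow> wf_ocd ?b"
    by (rule wf_ocd_add_closed_chords[where m = "[(c, b), (c, \<not> b)]", symmetric])
      (use n c in auto)
  have "chord_index ?b c = 0"
    using n by (cases b) (simp_all add: chord_index_def sign_prefix_append sign_prefix_Cons)
  moreover have "chords ?b = insert c (chords (u @ v))" by auto
  ultimately have "symmetric_indices ?b \<longleftrightarrow> symmetric_fibers (chords (u @ v)) (chord_index ?b)"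
    using c symmetric_fibers_insert_zero[of "chords (u @ v)" c "chord_index ?b"] by simp
  also have "\<dots> \<longleftrightarrow> symmetric_indices (u @ v)"
    using c by (intro symmetric_fibers_cong)
      (auto simp: chord_index_def sign_prefix_append sign_prefix_Cons)
  finally show "symmetric_indices (u @ v) \<longleftrightarrow> symmetric_indices ?b" by simp
qed

lemma invariants_R2:
  assumes pq: "p \<noteq> q" "p \<notin> chords (u @ v @ t)" "q \<notin> chords (u @ v @ t)"
    and r: "r = [(p, \<not> b), (q, b)] \<or> r = [(q, b), (p, \<not> b)]"
  shows "wf_ocd (u @ v @ t) \<longleftrightarrow> wf_ocd (u @ [(p, b), (q, \<not> b)] @ v @ r @ t)"
    and "wf_ocd (u @ v @ t) \<Longrightarrow>
      symmetric_indices (u @ v @ t) \<longleftrightarrow> symmetric_indices (u @ [(p, b), (q, \<not> b)] @ v @ r @ t)"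
proof -
  let ?b = "u @ [(p, b), (q, \<not> b)] @ v @ r @ t"
  have n: "\<And>b. (p, b) \<notin> set u" "\<And>b. (p, b) \<notin> set v" "\<And>b. (p, b) \<notin> set t"
    "\<And>b. (q, b) \<notin> set u" "\<And>b. (q, b) \<notin> set v" "\<And>b. (q, b) \<notin> set t"
    using endpoint_notin_set[OF pq(2)] endpoint_notin_set[OF pq(3)] by auto
  have "set r = {(p, \<not> b), (q, b)}" using r by auto
  then show "wf_ocd (u @ v @ t) \<longleftrightarrow> wf_ocd ?b"
    by (intro wf_ocd_add_closed_chords[where m = "[(p, b), (q, \<not> b), (p, \<not> b), (q, b)]", symmetric])
      (use n pq r in auto)
  have "chord_index ?b p = - chord_index ?b q" using n r pq(1)
    by (cases b; elim disjE) (simp_all add: chord_index_def sign_prefix_append sign_prefix_Cons)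
  moreover have "chords ?b = insert p (insert q (chords (u @ v @ t)))" using r by auto
  ultimately have "symmetric_indices ?b \<longleftrightarrow> symmetric_fibers (chords (u @ v @ t)) (chord_index ?b)"
    using pq symmetric_fibers_insert_opposite[of "chords (u @ v @ t)" p q "chord_index ?b"] by simp
  also have "\<dots> \<longleftrightarrow> symmetric_indices (u @ v @ t)"
    using pq r by (intro symmetric_fibers_cong, elim disjE)
      (auto simp: chord_index_def sign_prefix_append sign_prefix_Cons)
  finally show "symmetric_indices (u @ v @ t) \<longleftrightarrow> symmetric_indices ?b" by simp
qed

lemma r3_seg_chords:
  "chords (r3_seg1 x y z e1 e2 e3 s) = {x, y}"
  "chords (r3_seg2 x y z e1 e2 e3 s) = {x, z}"
  "chords (r3_seg3 x y z e1 e2 e3 s) = {y, z}"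
  unfolding r3_seg1_def r3_seg2_def r3_seg3_def by auto

text \<open>Each of the three chords of the triangle has one endpoint of each sign among the three
  segments; this is where \<open>e\<^sub>i, s \<in> {1, -1}\<close> is needed.\<close>
lemma r3_seg_endpoints:
  assumes "e1 \<in> {1, -1}" "e2 \<in> {1, -1}" "e3 \<in> {1, -1}" "s \<in> {1, -1}" "c \<in> {x, y, z}"
  shows "(c, b) \<in> set (r3_seg1 x y z e1 e2 e3 s) \<union> set (r3_seg2 x y z e1 e2 e3 s)
    \<union> set (r3_seg3 x y z e1 e2 e3 s)"
  using assms unfolding r3_seg1_def r3_seg2_def r3_seg3_def tsg_def
  by (simp only: insert_iff singleton_iff empty_iff simp_thms; elim disjE; auto)

lemma chord_index_r3_reverse:
  fixes x y z :: nat and e1 e2 e3 s :: int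
  assumes "x \<noteq> y" "x \<noteq> z" "y \<noteq> z"
    and "e1 \<in> {1, -1}" "e2 \<in> {1, -1}" "e3 \<in> {1, -1}" "s \<in> {1, -1}"
    and "c \<in> {x, y, z}" "\<And>b. (c, b) \<notin> set u \<union> set v \<union> set t"
  defines "s1 \<equiv> r3_seg1 x y z e1 e2 e3 s" and "s2 \<equiv> r3_seg2 x y z e1 e2 e3 s"
    and "s3 \<equiv> r3_seg3 x y z e1 e2 e3 s"
  shows "chord_index (rev s1 @ u @ rev s2 @ v @ rev s3 @ t) c = chord_index (s1 @ u @ s2 @ v @ s3 @ t) c"
  using assms(1-8) assms(9)[of True] assms(9)[of False]
  unfolding s1_def s2_def s3_def r3_seg1_def r3_seg2_def r3_seg3_def tsg_def chord_index_def
  by (simp only: insert_iff singleton_iff empty_iff simp_thms; elim disjE;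
      simp add: sign_prefix_append sign_prefix_Cons)

lemma invariants_R3:
  fixes x y z :: nat and e1 e2 e3 s :: int
  assumes "x \<noteq> y" "x \<noteq> z" "y \<noteq> z"
    and e: "e1 \<in> {1, -1}" "e2 \<in> {1, -1}" "e3 \<in> {1, -1}" "s \<in> {1, -1}"
  defines "s1 \<equiv> r3_seg1 x y z e1 e2 e3 s" and "s2 \<equiv> r3_seg2 x y z e1 e2 e3 s"
    and "s3 \<equiv> r3_seg3 x y z e1 e2 e3 s"
  shows "wf_ocd (s1 @ u @ s2 @ v @ s3 @ t) \<longleftrightarrow> wf_ocd (rev s1 @ u @ rev s2 @ v @ rev s3 @ t)"
    and "wf_ocd (s1 @ u @ s2 @ v @ s3 @ t) \<Longrightarrow>
      symmetric_indices (s1 @ u @ s2 @ v @ s3 @ t) \<longleftrightarrow> symmetric_indices (rev s1 @ u @ rev s2 @ v @ rev s3 @ t)"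
proof -
  let ?a = "s1 @ u @ s2 @ v @ s3 @ t" and ?b = "rev s1 @ u @ rev s2 @ v @ rev s3 @ t"
  show "wf_ocd ?a \<longleftrightarrow> wf_ocd ?b" by (simp add: wf_ocd_def)
  assume "wf_ocd ?a"
  then have dist: "distinct ?a" by (simp add: wf_ocd_def)
  have "chord_index ?a c = chord_index ?b c" for c
  proof (cases "c \<in> {x, y, z}")
    case True
    have "(c, b) \<in> set s1 \<union> set s2 \<union> set s3" for b
      using r3_seg_endpoints[OF e True, of b] unfolding s1_def s2_def s3_def .
    then have "(c, b) \<notin> set u \<union> set v \<union> set t" for b
      using dist by (simp only: distinct_append set_append) blast
    then show ?thesis
      unfolding s1_def s2_def s3_def by (rule chord_index_r3_reverse[OF assms(1-7) True, symmetric])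
  next
    case False
    then have "(c, b) \<notin> set s1 \<union> set s2 \<union> set s3" for b
      using r3_seg_chords[of x y z e1 e2 e3 s] unfolding s1_def s2_def s3_def by (blast dest: chordsI)
    then show ?thesis by (simp add: chord_index_def sign_prefix_append)
  qed
  then have "symmetric_indices ?a \<longleftrightarrow> symmetric_fibers (chords ?a) (chord_index ?b)"
    by (intro symmetric_fibers_cong)
  then show "symmetric_indices ?a \<longleftrightarrow> symmetric_indices ?b" by simp
qed

lemma flat_move_invariants:
  assumes "flat_move a b"
  shows "(wf_ocd a \<longleftrightarrow> wf_ocd b) \<and> (wf_ocd a \<longrightarrow> (symmetric_indices a \<longleftrightarrow> symmetric_indices b))"
  using assms
proof (induction rule: flat_move.induct)
  case (rotate w) then show ?case using invariants_rotate1 by blast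
next
  case (relabel f w) then show ?case using invariants_relabel[OF relabel] by blast
next
  case (R1 c u v b) then show ?case using invariants_R1[OF R1] by blast
next
  case (R2_par p q u v t b) then show ?case using invariants_R2[OF R2_par, of "[(p, \<not> b), (q, b)]"] by simp
next
  case (R2_anti p q u v t b) then show ?case using invariants_R2[OF R2_anti, of "[(q, b), (p, \<not> b)]"] by simp
next
  case (R3 x y z e1 e2 e3 s u v t) then show ?case using invariants_R3[OF R3, of u v t] by blast
qed

lemma flat_equiv_Nil_symmetric_indices:
  assumes "flat_equiv w []"
  shows "wf_ocd w \<and> symmetric_indices w"
proof -
  have "equivclp flat_move [] w" using assms equivclp_sym unfolding flat_equiv_def by metis
  then show ?thesis unfolding equivclp_def
  proof (induction rule: rtranclp_induct)
    case base then show ?case by (simp add: wf_ocd_def symmetric_fibers_def)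
  next
    case (step y z)
    from step.hyps(2) show ?case
      using flat_move_invariants step.IH by (cases rule: symclpE) blast+
  qed
qed

section \<open>Positions of endpoints and arcs of the circle\<close>

definition position :: "ocd \<Rightarrow> endpoint \<Rightarrow> nat" where
  "position w e = (THE k. k < length w \<and> w ! k = e)"

definition sign_partial_sum :: "ocd \<Rightarrow> nat \<Rightarrow> int" where
  "sign_partial_sum w k = (\<Sum>j<k. endpoint_sign (w ! j))"

definition in_arc :: "'a::linorder \<Rightarrow> 'a \<Rightarrow> 'a \<Rightarrow> bool" where
  "in_arc a b e \<longleftrightarrow> (if a < b then a < e \<and> e < b else a < e \<or> e < b)"

text \<open>\<open>\<plusminus>1\<close> if the chords from \<open>A u\<close> to \<open>B u\<close> and from \<open>A v\<close> to \<open>B v\<close> cross, 0 otherwise.\<close>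
definition arc_linking :: "('i \<Rightarrow> 'a::linorder) \<Rightarrow> ('i \<Rightarrow> 'a) \<Rightarrow> 'i \<Rightarrow> 'i \<Rightarrow> int" where
  "arc_linking A B u v = of_bool (in_arc (A u) (B u) (A v)) - of_bool (in_arc (A u) (B u) (B v))"

lemma in_arc_strict_mono:
  assumes "strict_mono f"
  shows "in_arc (f a) (f b) (f e) \<longleftrightarrow> in_arc a b e"
  unfolding in_arc_def using strict_mono_less[OF assms] by presburger

lemma arc_linking_self [simp]: "arc_linking A B u u = 0"
  by (auto simp: arc_linking_def in_arc_def)

lemma arc_linking_antisym:
  assumes "A u \<noteq> B u" "A v \<noteq> B v" "A u \<noteq> A v" "A u \<noteq> B v" "B u \<noteq> A v" "B u \<noteq> B v"
  shows "arc_linking A B u v + arc_linking A B v u = 0"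
proof -
  have "A u < B u \<or> B u < A u" "A v < B v \<or> B v < A v" using assms by auto
  then show ?thesis unfolding arc_linking_def in_arc_def using assms by (elim disjE) auto
qed

lemma sum_pair_exterior:
  fixes T :: "'a \<Rightarrow> 'a \<Rightarrow> 'b::ab_group_add"
  assumes "finite X" "x \<in> X" "y \<in> X" "\<And>u. T u u = 0" "T x y + T y x = 0"
  shows "(\<Sum>\<beta>\<in>{x, y}. \<Sum>\<gamma>\<in>X - {x, y}. T \<beta> \<gamma>) = (\<Sum>\<beta>\<in>{x, y}. \<Sum>\<gamma>\<in>X. T \<beta> \<gamma>)"
proof -
  have row: "(\<Sum>\<gamma>\<in>X. T \<beta> \<gamma>) = (\<Sum>\<gamma>\<in>X - {x, y}. T \<beta> \<gamma>) + (\<Sum>\<gamma>\<in>{x, y}. T \<beta> \<gamma>)" for \<beta>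
    using assms(1-3) by (metis add.commute empty_subsetI insert_subset sum.subset_diff)
  have "(\<Sum>\<beta>\<in>{x, y}. \<Sum>\<gamma>\<in>{x, y}. T \<beta> \<gamma>) = 0"
    using assms(4,5) by (cases "x = y") (simp_all add: algebra_simps)
  then show ?thesis by (simp add: row sum.distrib)
qed

lemma position_props:
  assumes "distinct w" "e \<in> set w"
  shows "position w e < length w" "w ! position w e = e"
proof -
  have "\<exists>!k. k < length w \<and> w ! k = e" using distinct_Ex1[OF assms] .
  then have "position w e < length w \<and> w ! position w e = e" unfolding position_def by (rule theI')
  then show "position w e < length w" "w ! position w e = e" by auto
qed

lemma position_nth:
  assumes "distinct w" "k < length w"
  shows "position w (w ! k) = k"
  using position_props[OF assms(1) nth_mem[OF assms(2)]] assms nth_eq_iff_index_eq by blast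

lemma sign_prefix_eq_partial_sum:
  assumes "distinct w" "e \<in> set w"
  shows "sign_prefix w e = sign_partial_sum w (position w e)"
proof -
  have p: "position w e < length w" "w ! position w e = e" using position_props[OF assms] by auto
  have "takeWhile (\<lambda>a. a \<noteq> e) w = take (position w e) w"
  proof (rule takeWhile_eq_take_P_nth)
    fix i assume "i < position w e" "i < length w"
    then show "w ! i \<noteq> e" using p assms(1) nth_eq_iff_index_eq by fastforce
  next
    show "position w e < length w \<Longrightarrow> \<not> w ! position w e \<noteq> e" using p by simp
  qed
  then have "sign_prefix w e = sign_sum (take (position w e) w)" by (simp add: sign_prefix_def)
  also have "\<dots> = sign_partial_sum w (position w e)"
    unfolding sign_sum_def sum_list_sum_nth sign_partial_sum_def using p(1) by (simp add: lessThan_atLeast0)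
  finally show ?thesis .
qed

lemma chord_index_eq_partial_sums:
  assumes "wf_ocd w" "x \<in> chords w"
  shows "chord_index w x
    = sign_partial_sum w (position w (x, True)) - sign_partial_sum w (position w (x, False)) + 1"
proof -
  have "distinct w" using assms(1) by (simp add: wf_ocd_def)
  then show ?thesis
    using sign_prefix_eq_partial_sum wf_ocd_endpoint_in_set[OF assms] by (simp add: chord_index_def)
qed

lemma sum_signs_in_arc:
  assumes wf: "wf_ocd w" and ab: "a < length w" "b < length w" "a \<noteq> b"
  shows "(\<Sum>k<length w. if in_arc a b k then endpoint_sign (w ! k) else 0)
    = sign_partial_sum w b - sign_partial_sum w a - endpoint_sign (w ! a)"
proof -
  let ?n = "length w" and ?f = "\<lambda>k. endpoint_sign (w ! k)"
  have split: "\<And>m p. m \<le> p \<Longrightarrow> (\<Sum>k<p. ?f k) = (\<Sum>k<m. ?f k) + (\<Sum>k\<in>{m..<p}. ?f k)"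
    by (metis atLeast0LessThan le0 sum.atLeastLessThan_concat)
  have Sa: "sign_partial_sum w (Suc a) = sign_partial_sum w a + ?f a" by (simp add: sign_partial_sum_def)
  have total: "sign_partial_sum w ?n = 0"
    using sign_sum_eq_0[OF wf] unfolding sign_sum_def sum_list_sum_nth sign_partial_sum_def
    by (simp add: lessThan_atLeast0)
  have e: "(\<Sum>k<?n. if in_arc a b k then ?f k else 0) = (\<Sum>k\<in>{k \<in> {..<?n}. in_arc a b k}. ?f k)"
    by (subst sum.inter_filter) auto
  show ?thesis
  proof (cases "a < b")
    case True
    have "{k \<in> {..<?n}. in_arc a b k} = {Suc a..<b}" using True ab by (auto simp: in_arc_def)
    moreover have "(\<Sum>k\<in>{Suc a..<b}. ?f k) = sign_partial_sum w b - sign_partial_sum w (Suc a)"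
      using split[of "Suc a" b] True unfolding sign_partial_sum_def by simp
    ultimately show ?thesis using e Sa by simp
  next
    case False
    then have ba: "b < a" using ab by simp
    have "{k \<in> {..<?n}. in_arc a b k} = {Suc a..<?n} \<union> {..<b}" using ba ab by (auto simp: in_arc_def)
    moreover have "(\<Sum>k\<in>{Suc a..<?n} \<union> {..<b}. ?f k) = (\<Sum>k\<in>{Suc a..<?n}. ?f k) + (\<Sum>k<b. ?f k)"
      by (rule sum.union_disjoint) (use ba in auto)
    moreover have "(\<Sum>k\<in>{Suc a..<?n}. ?f k) = sign_partial_sum w ?n - sign_partial_sum w (Suc a)"
      using split[of "Suc a" ?n] ab unfolding sign_partial_sum_def by simp
    ultimately show ?thesis using e Sa total by (simp add: sign_partial_sum_def)
  qed
qed

lemma bij_betw_position_endpoints: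
  assumes wf: "wf_ocd w" and g: "bij_betw g X (chords w)"
  shows "bij_betw (\<lambda>x. position w (g x, b)) X {k. k < length w \<and> snd (w ! k) = b}"
proof -
  have dist: "distinct w" using wf by (simp add: wf_ocd_def)
  note pos = position_props[OF dist wf_ocd_endpoint_in_set[OF wf]]
  have "bij_betw (\<lambda>c. position w (c, b)) (chords w) {k. k < length w \<and> snd (w ! k) = b}"
  proof (rule bij_betwI')
    fix c c' assume c: "c \<in> chords w" and c': "c' \<in> chords w"
    show "position w (c, b) = position w (c', b) \<longleftrightarrow> c = c'"
    proof
      assume "position w (c, b) = position w (c', b)"
      then have "(c, b) = (c', b)" by (metis pos(2)[OF c] pos(2)[OF c'])
      then show "c = c'" by simp
    qed simp
  next
    fix c assume "c \<in> chords w"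
    then show "position w (c, b) \<in> {k. k < length w \<and> snd (w ! k) = b}" using pos by simp
  next
    fix k assume k: "k \<in> {k. k < length w \<and> snd (w ! k) = b}"
    then have "w ! k = (fst (w ! k), b)" by (simp add: prod_eq_iff)
    moreover have "fst (w ! k) \<in> chords w" using k by (simp add: chords_def)
    moreover have "position w (w ! k) = k" using position_nth[OF dist] k by simp
    ultimately show "\<exists>c\<in>chords w. k = position w (c, b)" by metis
  qed
  then show ?thesis using bij_betw_trans[OF g] by (simp add: comp_def)
qed

text \<open>Every chord contributes one negative and one positive endpoint, so counting the
  endpoints \<open>(\<pi> v)\<^sup>-\<close> and \<open>V\<^sup>+\<close> inside an arc counts all endpoints there with opposite signs.\<close>
lemma sum_endpoints_in_arc:
  assumes wf: "wf_ocd w" and p: "bij_betw p (chords w) (chords w)"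
  shows "(\<Sum>v\<in>chords w. of_bool (in_arc a b (position w (p v, False)))
                       - of_bool (in_arc a b (position w (v, True))))
    = - (\<Sum>k<length w. if in_arc a b k then endpoint_sign (w ! k) else (0::int))"
proof -
  let ?N = "{k. k < length w \<and> snd (w ! k) = False}" and ?P = "{k. k < length w \<and> snd (w ! k) = True}"
  have neg: "(\<Sum>v\<in>chords w. of_bool (in_arc a b (position w (p v, False))))
      = (\<Sum>k\<in>?N. of_bool (in_arc a b k) :: int)"
    using sum.reindex_bij_betw[OF bij_betw_position_endpoints[OF wf p]] .
  have pos: "(\<Sum>v\<in>chords w. of_bool (in_arc a b (position w (v, True))))
      = (\<Sum>k\<in>?P. of_bool (in_arc a b k) :: int)"
  proof -
    have "bij_betw (\<lambda>x. position w (id x, True)) (chords w) ?P"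
      by (rule bij_betw_position_endpoints[OF wf bij_betw_id])
    from sum.reindex_bij_betw[OF this, of "\<lambda>k. of_bool (in_arc a b k)"] show ?thesis
      by (simp only: id_apply)
  qed
  have split: "(\<Sum>k\<in>{k. k < length w \<and> snd (w ! k) = c}. of_bool (in_arc a b k) :: int)
      = (\<Sum>k<length w. if snd (w ! k) = c then of_bool (in_arc a b k) else 0)" for c
    by (simp add: sum.inter_filter[symmetric] lessThan_def conj_commute)
  have "(\<Sum>v\<in>chords w. of_bool (in_arc a b (position w (p v, False)))
                       - of_bool (in_arc a b (position w (v, True))))
      = (\<Sum>k\<in>?N. of_bool (in_arc a b k)) - (\<Sum>k\<in>?P. of_bool (in_arc a b k) :: int)"
    by (simp only: sum_subtractf neg pos)
  also have "\<dots> = (\<Sum>k<length w. if snd (w ! k) = False then of_bool (in_arc a b k) else 0)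
      - (\<Sum>k<length w. if snd (w ! k) = True then of_bool (in_arc a b k) else 0)"
    by (simp only: split)
  also have "\<dots> = - (\<Sum>k<length w. if in_arc a b k then endpoint_sign (w ! k) else 0)"
    unfolding sum_subtractf[symmetric] sum_negf[symmetric] by (rule sum.cong) (auto simp: endpoint_sign_def)
  finally show ?thesis .
qed

section \<open>Counting simple zeros of a real function\<close>

lemma sgn_eq_if_no_zero:
  fixes f :: "real \<Rightarrow> real"
  assumes "continuous_on {a..b} f" "a \<le> b" "\<And>x. x \<in> {a..b} \<Longrightarrow> f x \<noteq> 0"
  shows "sgn (f b) = sgn (f a)"
proof (rule ccontr)
  assume "sgn (f b) \<noteq> sgn (f a)"
  then have "f a \<le> 0 \<and> 0 \<le> f b \<or> f b \<le> 0 \<and> 0 \<le> f a"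
    by (auto simp: sgn_if split: if_splits)
  then obtain x where "x \<in> {a..b}" "f x = 0"
    using IVT'[of f a 0 b] IVT2'[of f b 0 a] assms(1,2) by force
  then show False using assms(3) by blast
qed

lemma sgn_near_simple_zero:
  fixes f :: "real \<Rightarrow> real"
  assumes der: "(f has_real_derivative D) (at z)" and z: "f z = 0" "D \<noteq> 0"
  obtains d where "d > 0" "\<And>h. 0 < h \<Longrightarrow> h < d \<Longrightarrow> sgn (f (z + h)) = sgn D"
    "\<And>h. 0 < h \<Longrightarrow> h < d \<Longrightarrow> sgn (f (z - h)) = - sgn D"
proof (cases "D > 0")
  case True
  obtain d1 where d1: "d1 > 0" "\<And>h. 0 < h \<Longrightarrow> h < d1 \<Longrightarrow> f z < f (z + h)"
    using DERIV_pos_inc_right[OF der True] by blast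
  obtain d2 where d2: "d2 > 0" "\<And>h. 0 < h \<Longrightarrow> h < d2 \<Longrightarrow> f (z - h) < f z"
    using DERIV_pos_inc_left[OF der True] by blast
  show ?thesis
  proof (rule that[of "min d1 d2"])
    fix h assume "0 < h" "h < min d1 d2"
    then show "sgn (f (z + h)) = sgn D" "sgn (f (z - h)) = - sgn D" using d1 d2 z True by auto
  qed (use d1 d2 in auto)
next
  case False
  then have neg: "D < 0" using z by simp
  obtain d1 where d1: "d1 > 0" "\<And>h. 0 < h \<Longrightarrow> h < d1 \<Longrightarrow> f (z + h) < f z"
    using DERIV_neg_dec_right[OF der neg] by blast
  obtain d2 where d2: "d2 > 0" "\<And>h. 0 < h \<Longrightarrow> h < d2 \<Longrightarrow> f z < f (z - h)"
    using DERIV_neg_dec_left[OF der neg] by blast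
  show ?thesis
  proof (rule that[of "min d1 d2"])
    fix h assume "0 < h" "h < min d1 d2"
    then show "sgn (f (z + h)) = sgn D" "sgn (f (z - h)) = - sgn D" using d1 d2 z neg by auto
  qed (use d1 d2 in auto)
qed

lemma sgn_right_of_simple_zero:
  fixes f :: "real \<Rightarrow> real"
  assumes der: "\<And>x. (f has_real_derivative f' x) (at x)"
    and z: "f z = 0" "f' z \<noteq> 0" "z < b" and nz: "\<And>x. z < x \<Longrightarrow> x \<le> b \<Longrightarrow> f x \<noteq> 0"
  shows "sgn (f b) = sgn (f' z)"
proof -
  obtain d where d: "d > 0" "\<And>h. 0 < h \<Longrightarrow> h < d \<Longrightarrow> sgn (f (z + h)) = sgn (f' z)"
    "\<And>h. 0 < h \<Longrightarrow> h < d \<Longrightarrow> sgn (f (z - h)) = - sgn (f' z)"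
    using sgn_near_simple_zero[OF der[of z] z(1,2)] by metis
  define h where "h = min d (b - z) / 2"
  have h: "0 < h" "h < d" "z + h \<le> b" using d(1) z(3) by (auto simp: h_def min_def field_simps)
  have "continuous_on {z + h..b} f"
    using DERIV_isCont[OF der] by (simp add: continuous_at_imp_continuous_on)
  then have "sgn (f b) = sgn (f (z + h))" by (rule sgn_eq_if_no_zero) (use h nz in auto)
  then show ?thesis using d(2)[OF h(1,2)] by simp
qed

lemma sgn_left_of_simple_zero:
  fixes f :: "real \<Rightarrow> real"
  assumes der: "\<And>x. (f has_real_derivative f' x) (at x)"
    and z: "f z = 0" "f' z \<noteq> 0" "m < z"
  obtains y where "m < y" "y < z" "sgn (f y) = - sgn (f' z)" "\<And>x. y \<le> x \<Longrightarrow> x < z \<Longrightarrow> f x \<noteq> 0"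
proof -
  obtain d where d: "d > 0" "\<And>h. 0 < h \<Longrightarrow> h < d \<Longrightarrow> sgn (f (z + h)) = sgn (f' z)"
    "\<And>h. 0 < h \<Longrightarrow> h < d \<Longrightarrow> sgn (f (z - h)) = - sgn (f' z)"
    using sgn_near_simple_zero[OF der[of z] z(1,2)] by metis
  define h where "h = min d (z - m) / 2"
  have h: "0 < h" "h < d" "m < z - h" using d(1) z(3) by (auto simp: h_def min_def field_simps)
  define y where "y = z - h"
  have y: "m < y" "y < z" using h by (auto simp: y_def)
  have sx: "sgn (f x) = - sgn (f' z)" if "y \<le> x" "x < z" for x
  proof -
    have "0 < z - x" "z - x < d" using that h by (auto simp: y_def)
    from d(3)[OF this] show ?thesis by simp
  qed
  show ?thesis
  proof (rule that[OF y])
    show "sgn (f y) = - sgn (f' z)" using sx y by simp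
    fix x assume "y \<le> x" "x < z"
    then show "f x \<noteq> 0" using sx[of x] z(2) by (auto simp: sgn_0_0)
  qed
qed

text \<open>For a function with finitely many zeros on \<open>[lo, hi]\<close>, all of them simple, the signs of the
  derivative at the zeros alternate, so their sum is determined by the signs at the two ends.\<close>
lemma sum_sgn_deriv_over_zeros:
  fixes f :: "real \<Rightarrow> real"
  assumes der: "\<And>x. (f has_real_derivative f' x) (at x)"
    and "lo < hi" "f lo \<noteq> 0" "f hi \<noteq> 0" "finite {z \<in> {lo..hi}. f z = 0}"
    and "\<forall>z\<in>{lo..hi}. f z = 0 \<longrightarrow> f' z \<noteq> 0"
  shows "2 * (\<Sum>z\<in>{z \<in> {lo..hi}. f z = 0}. sgn (f' z)) = sgn (f hi) - sgn (f lo)"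
  using assms(2-)
proof (induction "card {z \<in> {lo..hi}. f z = 0}" arbitrary: hi)
  case 0
  then have e: "{z \<in> {lo..hi}. f z = 0} = {}" by simp
  have "continuous_on {lo..hi} f"
    using DERIV_isCont[OF der] by (simp add: continuous_at_imp_continuous_on)
  then have "sgn (f hi) = sgn (f lo)" by (rule sgn_eq_if_no_zero) (use 0 e in auto)
  then show ?case unfolding e by simp
next
  case (Suc n)
  let ?Z = "{z \<in> {lo..hi}. f z = 0}"
  have ne: "?Z \<noteq> {}" using Suc.hyps(2)[symmetric] by (metis Zero_not_Suc card.empty)
  define z where "z = Max ?Z"
  have zZ: "z \<in> ?Z" unfolding z_def using Suc.prems(4) ne by (rule Max_in)
  have zmax: "\<And>x. x \<in> ?Z \<Longrightarrow> x \<le> z" unfolding z_def using Suc.prems(4) by simp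
  have zlo: "lo < z" and zhi: "z < hi"
    using zZ Suc.prems(2,3) by (auto simp: order_le_less)
  have fz: "f z = 0" "f' z \<noteq> 0" using zZ Suc.prems(5) by auto
  have right: "sgn (f hi) = sgn (f' z)"
  proof (rule sgn_right_of_simple_zero[OF der fz zhi])
    fix x assume "z < x" "x \<le> hi"
    then show "f x \<noteq> 0" using zmax[of x] zlo by auto
  qed
  define Z' where "Z' = ?Z - {z}"
  have fZ': "finite Z'" unfolding Z'_def using Suc.prems(4) by simp
  have Z'lt: "\<And>x. x \<in> Z' \<Longrightarrow> x < z" unfolding Z'_def using zmax by force
  define m where "m = (if Z' = {} then lo else max lo (Max Z'))"
  have mz: "m < z" unfolding m_def using zlo Z'lt fZ' by (auto simp: Max_less_iff)
  have mge: "x \<le> m" if x: "x \<in> Z'" for x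
  proof -
    have "x \<le> Max Z'" by (rule Max_ge[OF fZ' x])
    then show "x \<le> m" unfolding m_def using x by auto
  qed
  have mlo: "lo \<le> m" unfolding m_def by auto
  obtain y where y: "m < y" "y < z" "sgn (f y) = - sgn (f' z)"
    and ynz: "\<And>x. y \<le> x \<Longrightarrow> x < z \<Longrightarrow> f x \<noteq> 0"
    using sgn_left_of_simple_zero[OF der fz mz] by metis
  have fy: "f y \<noteq> 0" using y(3) fz(2) by (auto simp: sgn_0_0)
  have Zy: "{x \<in> {lo..y}. f x = 0} = Z'"
  proof
    show "{x \<in> {lo..y}. f x = 0} \<subseteq> Z'" unfolding Z'_def using y zhi by auto
    show "Z' \<subseteq> {x \<in> {lo..y}. f x = 0}"
      using mge y unfolding Z'_def by fastforce
  qed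
  have cZ': "card Z' = n" unfolding Z'_def using Suc.hyps(2) Suc.prems(4) zZ by simp
  have IH: "2 * (\<Sum>x\<in>Z'. sgn (f' x)) = sgn (f y) - sgn (f lo)"
  proof -
    have "\<forall>x\<in>{lo..y}. f x = 0 \<longrightarrow> f' x \<noteq> 0" using Suc.prems(5) y zhi by auto
    moreover have "lo < y" using mlo y by auto
    ultimately show ?thesis using Suc.hyps(1)[of y] Zy cZ' Suc.prems(2) fy fZ' by auto
  qed
  have "(\<Sum>x\<in>?Z. sgn (f' x)) = sgn (f' z) + (\<Sum>x\<in>Z'. sgn (f' x))"
    using sum.remove[OF Suc.prems(4) zZ] unfolding Z'_def by simp
  then show ?case using IH y(3) right by simp
qed

section \<open>Generic coefficients for the filaments\<close>

definition bump :: "('i \<Rightarrow> real) \<Rightarrow> ('i \<Rightarrow> real) \<Rightarrow> 'i \<Rightarrow> real \<Rightarrow> real" where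
  "bump A B x t = (t - A x) * (B x - t)"

definition bump_deriv :: "('i \<Rightarrow> real) \<Rightarrow> ('i \<Rightarrow> real) \<Rightarrow> 'i \<Rightarrow> real \<Rightarrow> real" where
  "bump_deriv A B x t = A x + B x - 2 * t"

definition separated_ends :: "'i set \<Rightarrow> ('i \<Rightarrow> real) \<Rightarrow> ('i \<Rightarrow> real) \<Rightarrow> bool" where
  "separated_ends X A B \<longleftrightarrow> (\<forall>x\<in>X. A x \<noteq> B x) \<and>
     (\<forall>x\<in>X. \<forall>y\<in>X. x \<noteq> y \<longrightarrow> A x \<noteq> A y \<and> A x \<noteq> B y \<and> B x \<noteq> A y \<and> B x \<noteq> B y)"

definition no_tangencies :: "'i set \<Rightarrow> ('i \<Rightarrow> real \<Rightarrow> real) \<Rightarrow> ('i \<Rightarrow> real \<Rightarrow> real) \<Rightarrow> bool" where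
  "no_tangencies X h h' \<longleftrightarrow> (\<forall>x\<in>X. \<forall>y\<in>X. x \<noteq> y \<longrightarrow> (\<forall>t. h x t = h y t \<longrightarrow> h' x t \<noteq> h' y t))"

definition no_triple_points :: "'i set \<Rightarrow> ('i \<Rightarrow> real \<Rightarrow> real) \<Rightarrow> bool" where
  "no_triple_points X h \<longleftrightarrow>
     (\<forall>x\<in>X. \<forall>y\<in>X. \<forall>z\<in>X. x \<noteq> y \<longrightarrow> x \<noteq> z \<longrightarrow> y \<noteq> z \<longrightarrow> (\<forall>t. \<not> (h x t = h y t \<and> h x t = h z t)))"

text \<open>The filament of \<open>x\<close> will have radius \<open>1 - c x * bump A B x \<phi>\<close> at angle \<open>\<phi>\<close>; the bound on
  \<open>c x\<close> keeps this radius positive, as \<open>bump A B x \<phi> < 16\<close> for angles in \<open>[0, 2\<pi>)\<close>.\<close>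
definition generic_coeffs :: "'i set \<Rightarrow> ('i \<Rightarrow> real) \<Rightarrow> ('i \<Rightarrow> real) \<Rightarrow> ('i \<Rightarrow> real) \<Rightarrow> bool" where
  "generic_coeffs X A B c \<longleftrightarrow> (\<forall>x\<in>X. 0 < c x \<and> c x < 1/100) \<and>
    no_tangencies X (\<lambda>x t. c x * bump A B x t) (\<lambda>x t. c x * bump_deriv A B x t) \<and>
    no_triple_points X (\<lambda>x t. c x * bump A B x t)"

lemma no_tangencies_insertI:
  assumes "no_tangencies X h h'" "x \<notin> X"
    and "\<And>y t. y \<in> X \<Longrightarrow> h x t = h y t \<Longrightarrow> h' x t = h' y t \<Longrightarrow> False"
  shows "no_tangencies (insert x X) h h'"
  using assms unfolding no_tangencies_def by (metis insert_iff)

lemma no_triple_points_insertI: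
  assumes "no_triple_points X h" "x \<notin> X"
    and "\<And>y z t. y \<in> X \<Longrightarrow> z \<in> X \<Longrightarrow> y \<noteq> z \<Longrightarrow> h x t = h y t \<Longrightarrow> h x t = h z t \<Longrightarrow> False"
  shows "no_triple_points (insert x X) h"
  unfolding no_triple_points_def
proof (intro ballI impI allI notI)
  fix y z w t assume yzw: "y \<in> insert x X" "z \<in> insert x X" "w \<in> insert x X" "y \<noteq> z" "y \<noteq> w" "z \<noteq> w"
    and e: "h y t = h z t \<and> h y t = h w t"
  show False
  proof (cases "x \<in> {y, z, w}")
    case True
    then obtain u1 u2 where "u1 \<in> X" "u2 \<in> X" "u1 \<noteq> u2" "h x t = h u1 t" "h x t = h u2 t"
      using yzw e assms(2) by auto
    then show False by (rule assms(3))
  next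
    case False
    then show False using yzw e assms(1) unfolding no_triple_points_def by auto
  qed
qed

lemma bump_eq_0_iff: "bump A B x t = 0 \<longleftrightarrow> t = A x \<or> t = B x"
  by (auto simp: bump_def)

lemma separated_ends_insertD: "separated_ends (insert x X) A B \<Longrightarrow> separated_ends X A B"
  by (auto simp: separated_ends_def)

lemma finite_bump_coincidences:
  assumes "separated_ends X A B" "x \<in> X" "y \<in> X" "x \<noteq> y" "cy \<noteq> 0"
  shows "finite {t. cx * bump A B x t = cy * bump A B y t}"
proof -
  define p where "p = smult cx [: - (A x * B x), A x + B x, -1 :] - smult cy [: - (A y * B y), A y + B y, -1 :]"
  have p: "poly p t = cx * bump A B x t - cy * bump A B y t" for t
    by (simp add: p_def bump_def algebra_simps)
  have "bump A B y (A x) \<noteq> 0" using assms(1-4) unfolding separated_ends_def bump_eq_0_iff by metis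
  then have "poly p (A x) \<noteq> 0" using assms(5) by (simp add: p bump_def)
  then have "p \<noteq> 0" by auto
  then show ?thesis using poly_roots_finite[of p] by (simp add: p)
qed

lemma finite_bump_wronskian_zeros:
  assumes "separated_ends X A B" "x \<in> X" "y \<in> X" "x \<noteq> y"
  shows "finite {t. bump A B x t * bump_deriv A B y t - bump A B y t * bump_deriv A B x t = 0}"
proof -
  define p where "p = [: - (A x * B x), A x + B x, -1 :] * [: A y + B y, -2 :]
    - [: - (A y * B y), A y + B y, -1 :] * [: A x + B x, -2 :]"
  have p: "poly p t = bump A B x t * bump_deriv A B y t - bump A B y t * bump_deriv A B x t" for t
    by (simp add: p_def bump_def bump_deriv_def algebra_simps)
  have "bump A B y (A x) \<noteq> 0" using assms unfolding separated_ends_def bump_eq_0_iff by metis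
  moreover have "bump_deriv A B x (A x) \<noteq> 0" using assms unfolding separated_ends_def bump_deriv_def by auto
  ultimately have "poly p (A x) \<noteq> 0" by (simp add: p bump_def)
  then have "p \<noteq> 0" by auto
  then show ?thesis using poly_roots_finite[of p] by (simp add: p)
qed

lemma bump_nonzero_at_coincidence:
  assumes "separated_ends X A B" "x \<in> X" "y \<in> X" "x \<noteq> y" "cy \<noteq> 0"
    and "v * bump A B x t = cy * bump A B y t"
  shows "bump A B x t \<noteq> 0"
proof
  assume g: "bump A B x t = 0"
  then have "bump A B y t = 0" using assms(5,6) by simp
  then show False using g assms(1-4) unfolding bump_eq_0_iff separated_ends_def by metis
qed

lemma generic_new_coeff_exists:
  assumes fin: "finite X" and x: "x \<notin> X" and sep: "separated_ends (insert x X) A B"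
    and c_pos: "\<And>y. y \<in> X \<Longrightarrow> 0 < c y"
  obtains v where "0 < v" "v < 1/100"
    "\<And>y t. y \<in> X \<Longrightarrow> v * bump A B x t = c y * bump A B y t \<Longrightarrow>
      v * bump_deriv A B x t = c y * bump_deriv A B y t \<Longrightarrow> False"
    "\<And>y z t. y \<in> X \<Longrightarrow> z \<in> X \<Longrightarrow> y \<noteq> z \<Longrightarrow> v * bump A B x t = c y * bump A B y t \<Longrightarrow>
      v * bump A B x t = c z * bump A B z t \<Longrightarrow> False"
proof -
  have sX: "separated_ends X A B" by (rule separated_ends_insertD[OF sep])
  txt \<open>The new coefficient \<open>v\<close> must avoid the finitely many values for which the new
    filament is tangent to an old one (\<open>Bad1\<close>) or passes through a meeting point of two old ones
    (\<open>Bad2\<close>).\<close>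
  let ?r = "\<lambda>y t. c y * bump A B y t / bump A B x t"
  define Bad1 where "Bad1 = (\<Union>y\<in>X. ?r y ` {t. bump A B x t * bump_deriv A B y t - bump A B y t * bump_deriv A B x t = 0})"
  define Bad2 where "Bad2 = (\<Union>y\<in>X. \<Union>z\<in>X - {y}. ?r y ` {t. c y * bump A B y t = c z * bump A B z t})"
  have f1: "finite Bad1" unfolding Bad1_def
    using finite_bump_wronskian_zeros[OF sep] x fin by auto
  have f2: "finite Bad2" unfolding Bad2_def
  proof (intro finite_UN_I fin finite_Diff finite_imageI)
    fix y z assume "y \<in> X" "z \<in> X - {y}"
    then show "finite {t. c y * bump A B y t = c z * bump A B z t}"
      using finite_bump_coincidences[OF sX, of y z "c z" "c y"] c_pos by force
  qed
  have "infinite ({0<..<1/100::real} - (Bad1 \<union> Bad2))"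
    using f1 f2 by (intro Diff_infinite_finite) (auto simp: infinite_Ioo)
  then obtain v where v: "v \<in> {0<..<1/100::real}" "v \<notin> Bad1" "v \<notin> Bad2"
    by (metis Diff_iff UnI1 UnI2 finite.emptyI ex_in_conv)
  have tang: False if y: "y \<in> X" and e1: "v * bump A B x t = c y * bump A B y t"
      and e2: "v * bump_deriv A B x t = c y * bump_deriv A B y t" for y t
  proof -
    have xy: "x \<noteq> y" using y x by auto
    have cy: "c y \<noteq> 0" using c_pos y by force
    have gx: "bump A B x t \<noteq> 0" using bump_nonzero_at_coincidence[OF sep _ _ xy cy e1] y by auto
    have "v * c y * (bump A B x t * bump_deriv A B y t - bump A B y t * bump_deriv A B x t)
        = (v * bump A B x t) * (c y * bump_deriv A B y t) - (c y * bump A B y t) * (v * bump_deriv A B x t)"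
      by (simp add: algebra_simps)
    also have "\<dots> = 0" using e1 e2 by simp
    finally have "bump A B x t * bump_deriv A B y t - bump A B y t * bump_deriv A B x t = 0"
      using v(1) cy by simp
    moreover have "v = ?r y t" using e1 gx by (simp add: field_simps)
    ultimately have "v \<in> Bad1" unfolding Bad1_def using y by blast
    then show False using v by blast
  qed
  have trip: False if y: "y \<in> X" "z \<in> X" "y \<noteq> z" and e1: "v * bump A B x t = c y * bump A B y t"
      and e2: "v * bump A B x t = c z * bump A B z t" for y z t
  proof -
    have xy: "x \<noteq> y" using y x by auto
    have cy: "c y \<noteq> 0" using c_pos y by force
    have gx: "bump A B x t \<noteq> 0" using bump_nonzero_at_coincidence[OF sep _ _ xy cy e1] y by auto
    have "v = ?r y t" using e1 gx by (simp add: field_simps)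
    moreover have "c y * bump A B y t = c z * bump A B z t" using e1 e2 by simp
    ultimately have "v \<in> Bad2" unfolding Bad2_def using y by blast
    then show False using v by blast
  qed
  show ?thesis using that v(1) tang trip by auto
qed

lemma generic_coeffs_exist:
  assumes "finite X" "separated_ends X A B"
  shows "\<exists>c. generic_coeffs X A B c"
  using assms
proof (induction X rule: finite_induct)
  case empty
  show ?case by (rule exI[of _ "\<lambda>_. 1/200"]) (simp add: generic_coeffs_def no_tangencies_def no_triple_points_def)
next
  case (insert x X)
  obtain c where c: "generic_coeffs X A B c"
    using insert.IH[OF separated_ends_insertD[OF insert.prems]] by blast
  then have "\<And>y. y \<in> X \<Longrightarrow> 0 < c y" by (simp add: generic_coeffs_def)
  then obtain v where v: "0 < v" "v < 1/100"
    and tang: "\<And>y t. y \<in> X \<Longrightarrow> v * bump A B x t = c y * bump A B y t \<Longrightarrow>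
      v * bump_deriv A B x t = c y * bump_deriv A B y t \<Longrightarrow> False"
    and trip: "\<And>y z t. y \<in> X \<Longrightarrow> z \<in> X \<Longrightarrow> y \<noteq> z \<Longrightarrow> v * bump A B x t = c y * bump A B y t \<Longrightarrow>
      v * bump A B x t = c z * bump A B z t \<Longrightarrow> False"
    using generic_new_coeff_exists[OF insert.hyps(1,2) insert.prems] by metis
  let ?c = "c(x := v)"
  have c_upd: "?c x = v" "\<And>y. y \<in> X \<Longrightarrow> ?c y = c y" using insert.hyps(2) by auto
  have "generic_coeffs (insert x X) A B ?c"
    unfolding generic_coeffs_def
  proof (intro conjI)
    show "\<forall>y\<in>insert x X. 0 < ?c y \<and> ?c y < 1/100"
      using v c c_upd by (auto simp: generic_coeffs_def)
    have "no_tangencies X (\<lambda>y t. ?c y * bump A B y t) (\<lambda>y t. ?c y * bump_deriv A B y t)"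
      using c c_upd(2) by (simp add: generic_coeffs_def no_tangencies_def)
    then show "no_tangencies (insert x X) (\<lambda>y t. ?c y * bump A B y t) (\<lambda>y t. ?c y * bump_deriv A B y t)"
      by (rule no_tangencies_insertI[OF _ insert.hyps(2)]) (use tang c_upd in simp)
    have "no_triple_points X (\<lambda>y t. ?c y * bump A B y t)"
      using c c_upd(2) by (simp add: generic_coeffs_def no_triple_points_def)
    then show "no_triple_points (insert x X) (\<lambda>y t. ?c y * bump A B y t)"
    proof (rule no_triple_points_insertI[OF _ insert.hyps(2)])
      fix y z t assume "y \<in> X" "z \<in> X" "y \<noteq> z"
        "?c x * bump A B x t = ?c y * bump A B y t" "?c x * bump A B x t = ?c z * bump A B z t"
      then show False using trip[of y z t] c_upd by simp
    qed
  qed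
  then show ?case by blast
qed

section \<open>The filaments\<close>

lemma Arg2pi_cis: "0 \<le> a \<Longrightarrow> a < 2 * pi \<Longrightarrow> Arg2pi (cis a) = a"
  by (rule Arg2pi_unique[of 1]) (simp_all add: cis_conv_exp)

lemma bump_pos:
  assumes "min (A x) (B x) < e" "e < max (A x) (B x)"
  shows "0 < bump A B x e"
  using assms by (cases "A x < B x") (simp_all add: bump_def mult_neg_neg)

text \<open>For two filaments with end angles \<open>a\<^sub>1, b\<^sub>1\<close> and \<open>a\<^sub>2, b\<^sub>2\<close>, \<open>[lo, hi]\<close> is their common range
  of angles, and \<open>s e = 1\<close> iff the first filament ends at angle \<open>e\<close>, where it lies outside the
  second one.\<close>
lemma interleaving_count:
  fixes a1 b1 a2 b2 :: real
  assumes d: "a1 \<noteq> b1" "a2 \<noteq> b2" "a1 \<noteq> a2" "a1 \<noteq> b2" "b1 \<noteq> a2" "b1 \<noteq> b2"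
  defines "lo \<equiv> max (min a1 b1) (min a2 b2)" and "hi \<equiv> min (max a1 b1) (max a2 b2)"
  defines "s \<equiv> \<lambda>e. (if e = a1 \<or> e = b1 then 1 else - 1 :: real)"
  shows "(if lo < hi then sgn ((b1 - a1) * (b2 - a2)) * (s hi - s lo) else 0)
     = 2 * (of_bool (in_arc a1 b1 a2) - of_bool (in_arc a1 b1 b2))"
proof -
  have "a1 < b1 \<or> b1 < a1" "a2 < b2 \<or> b2 < a2" using d by auto
  then show ?thesis
    unfolding lo_def hi_def s_def in_arc_def using d
    by (elim disjE) (auto simp: sgn_mult min_def max_def)
qed

lemma cis_linear_has_vector_derivative:
  "((\<lambda>t. cis (a + t * d)) has_vector_derivative (complex_of_real d * (\<i> * cis (a + t * d)))) (at t)"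
proof -
  have "((\<lambda>t. a + t * d) has_derivative (\<lambda>h. h * d)) (at t)"
    by (auto intro!: derivative_eq_intros)
  from has_derivative_cis[OF this] show ?thesis
    unfolding has_vector_derivative_def by (simp add: scaleR_conv_of_real algebra_simps)
qed

locale filament_family =
  fixes X :: "nat set" and A B c :: "nat \<Rightarrow> real"
  assumes finX: "finite X" and sepX: "separated_ends X A B" and genericX: "generic_coeffs X A B c"
    and rngA: "\<forall>x\<in>X. 0 \<le> A x \<and> A x < 2 * pi" and rngB: "\<forall>x\<in>X. 0 \<le> B x \<and> B x < 2 * pi"
begin

definition fil_angle :: "nat \<Rightarrow> real \<Rightarrow> real" where
  "fil_angle x t = A x + t * (B x - A x)"

definition fil_radius :: "nat \<Rightarrow> real \<Rightarrow> real" where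
  "fil_radius x \<phi> = 1 - c x * bump A B x \<phi>"

definition fil :: "nat \<Rightarrow> real \<Rightarrow> complex" where
  "fil x t = complex_of_real (fil_radius x (fil_angle x t)) * cis (fil_angle x t)"

definition fil_deriv :: "nat \<Rightarrow> real \<Rightarrow> complex" where
  "fil_deriv x t = complex_of_real (B x - A x) * (complex_of_real (- c x * bump_deriv A B x (fil_angle x t))
      + \<i> * complex_of_real (fil_radius x (fil_angle x t))) * cis (fil_angle x t)"

definition radius_gap :: "nat \<Rightarrow> nat \<Rightarrow> real \<Rightarrow> real" where
  "radius_gap x y \<phi> = c y * bump A B y \<phi> - c x * bump A B x \<phi>"

definition radius_gap_deriv :: "nat \<Rightarrow> nat \<Rightarrow> real \<Rightarrow> real" where
  "radius_gap_deriv x y \<phi> = c y * bump_deriv A B y \<phi> - c x * bump_deriv A B x \<phi>"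

definition angle_lo :: "nat \<Rightarrow> nat \<Rightarrow> real" where
  "angle_lo x y = max (min (A x) (B x)) (min (A y) (B y))"

definition angle_hi :: "nat \<Rightarrow> nat \<Rightarrow> real" where
  "angle_hi x y = min (max (A x) (B x)) (max (A y) (B y))"

definition meeting_angles :: "nat \<Rightarrow> nat \<Rightarrow> real set" where
  "meeting_angles x y = {\<phi> \<in> {angle_lo x y..angle_hi x y}. radius_gap x y \<phi> = 0}"

lemma coeff_bounds: "x \<in> X \<Longrightarrow> 0 < c x \<and> c x < 1/100"
  using genericX by (simp add: generic_coeffs_def)

lemma ends_neq: "x \<in> X \<Longrightarrow> A x \<noteq> B x"
  using sepX by (simp add: separated_ends_def)

lemma bump_fil_angle: "bump A B x (fil_angle x t) = (B x - A x)^2 * (t * (1 - t))"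
  by (simp add: bump_def fil_angle_def power2_eq_square algebra_simps)

lemma fil_radius_bounds:
  assumes x: "x \<in> X" and t: "0 \<le> t" "t \<le> 1"
  shows "0 < fil_radius x (fil_angle x t)" "fil_radius x (fil_angle x t) \<le> 1" "0 < t \<Longrightarrow> t < 1 \<Longrightarrow> fil_radius x (fil_angle x t) < 1"
proof -
  have "0 \<le> A x" "A x < 2 * pi" "0 \<le> B x" "B x < 2 * pi" using rngA rngB x by auto
  then have d: "\<bar>B x - A x\<bar> < 2 * pi" by (simp add: abs_less_iff)
  have "\<bar>B x - A x\<bar>^2 < (2 * pi)^2" by (rule power_strict_mono[OF d]) auto
  then have s1: "(B x - A x)^2 < (2 * pi)^2" by simp
  have "2 * pi < 8" using pi_less_4 by simp
  then have "(2 * pi)^2 < 8^2" by (intro power_strict_mono) auto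
  then have sq: "(B x - A x)^2 < 64" using s1 by simp
  have e: "t * (1 - t) = 1/4 - (t - 1/2)^2" by (simp add: power2_eq_square algebra_simps)
  have tt: "0 \<le> t * (1 - t)" "t * (1 - t) \<le> 1/4" using t unfolding e[symmetric] by simp
    (simp add: e)
  have c: "0 < c x" "c x < 1/100" using coeff_bounds x by auto
  have g0: "0 \<le> (B x - A x)^2 * (t * (1 - t))" using tt by simp
  have g1: "(B x - A x)^2 * (t * (1 - t)) \<le> 64 * (1/4)"
    using tt sq by (intro mult_mono) auto
  have "c x * ((B x - A x)^2 * (t * (1 - t))) < 1"
  proof -
    have "c x * ((B x - A x)^2 * (t * (1 - t))) \<le> c x * 16" using g1 c by (intro mult_left_mono) auto
    then show ?thesis using c by linarith
  qed
  then show "0 < fil_radius x (fil_angle x t)" unfolding fil_radius_def bump_fil_angle by simp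
  show "fil_radius x (fil_angle x t) \<le> 1" unfolding fil_radius_def bump_fil_angle using c g0 by simp
  assume "0 < t" "t < 1"
  then have "0 < t * (1 - t)" by simp
  moreover have "0 < (B x - A x)^2" using ends_neq[OF x] by simp
  ultimately show "fil_radius x (fil_angle x t) < 1" unfolding fil_radius_def bump_fil_angle using c by simp
qed

lemma fil_at_0: "fil x 0 = cis (A x)" by (simp add: fil_def fil_radius_def fil_angle_def bump_def)
lemma fil_at_1: "fil x 1 = cis (B x)" by (simp add: fil_def fil_radius_def fil_angle_def bump_def)

lemma norm_fil: "x \<in> X \<Longrightarrow> 0 \<le> t \<Longrightarrow> t \<le> 1 \<Longrightarrow> norm (fil x t) = fil_radius x (fil_angle x t)"
  using fil_radius_bounds[of x t] by (simp add: fil_def norm_mult)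

lemma fil_has_vector_derivative: "(fil x has_vector_derivative fil_deriv x t) (at t)"
proof -
  have r: "((\<lambda>t. fil_radius x (fil_angle x t)) has_real_derivative (- c x * bump_deriv A B x (fil_angle x t) * (B x - A x))) (at t)"
    unfolding fil_radius_def bump_def bump_deriv_def fil_angle_def
    by (auto intro!: derivative_eq_intros simp: algebra_simps)
  have "((\<lambda>t. complex_of_real (fil_radius x (fil_angle x t)) * cis (A x + t * (B x - A x))) has_vector_derivative
      (complex_of_real (fil_radius x (fil_angle x t)) * (complex_of_real (B x - A x) * (\<i> * cis (A x + t * (B x - A x))))
       + complex_of_real (- c x * bump_deriv A B x (fil_angle x t) * (B x - A x)) * cis (A x + t * (B x - A x)))) (at t)"
    by (intro has_vector_derivative_mult has_vector_derivative_of_real r cis_linear_has_vector_derivative)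
  moreover have "complex_of_real (fil_radius x (fil_angle x t)) * (complex_of_real (B x - A x) * (\<i> * cis (A x + t * (B x - A x))))
       + complex_of_real (- c x * bump_deriv A B x (fil_angle x t) * (B x - A x)) * cis (A x + t * (B x - A x)) = fil_deriv x t"
    unfolding fil_deriv_def fil_angle_def[symmetric] of_real_mult
    by (simp only: ring_distribs mult_ac add_ac)
  ultimately show ?thesis unfolding fil_def fil_angle_def[symmetric] by simp
qed

lemma continuous_on_fil_deriv: "continuous_on S (fil_deriv x)"
  unfolding fil_deriv_def fil_radius_def bump_def bump_deriv_def fil_angle_def by (intro continuous_intros)

lemma dv_fil: "0 \<le> t \<Longrightarrow> t \<le> 1 \<Longrightarrow> dv (fil x) t = fil_deriv x t"
  unfolding dv_def by (rule vector_derivative_at_within_ivl[OF fil_has_vector_derivative]) auto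

lemma fil_deriv_nonzero: assumes "x \<in> X" "0 \<le> t" "t \<le> 1" shows "fil_deriv x t \<noteq> 0"
proof -
  have "Im (complex_of_real (- c x * bump_deriv A B x (fil_angle x t)) + \<i> * complex_of_real (fil_radius x (fil_angle x t))) \<noteq> 0"
    using fil_radius_bounds(1)[OF assms] by simp
  then have "complex_of_real (- c x * bump_deriv A B x (fil_angle x t)) + \<i> * complex_of_real (fil_radius x (fil_angle x t)) \<noteq> 0"
    by auto
  moreover have "complex_of_real (B x - A x) \<noteq> 0" using ends_neq[OF assms(1)] by simp
  ultimately show ?thesis unfolding fil_deriv_def by simp
qed

lemma fil_C1_differentiable: "fil x C1_differentiable_on {0..1}"
  unfolding C1_differentiable_on_def using fil_has_vector_derivative continuous_on_fil_deriv by blast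

lemma fil_angle_bounds:
  assumes x: "x \<in> X" and t: "0 \<le> t" "t \<le> 1"
  shows "min (A x) (B x) \<le> fil_angle x t" "fil_angle x t \<le> max (A x) (B x)" "0 \<le> fil_angle x t" "fil_angle x t < 2 * pi"
proof -
  have r: "0 \<le> A x" "A x < 2 * pi" "0 \<le> B x" "B x < 2 * pi" using rngA rngB x by auto
  have "min (A x) (B x) \<le> fil_angle x t \<and> fil_angle x t \<le> max (A x) (B x)"
  proof (cases "A x \<le> B x")
    case True
    have "0 \<le> t * (B x - A x)" using True t by simp
    moreover have "t * (B x - A x) \<le> B x - A x" using True t by (simp add: mult_left_le_one_le)
    ultimately show ?thesis using True by (simp add: fil_angle_def)
  next
    case False
    have "0 \<le> t * (A x - B x)" using False t by simp
    moreover have "t * (A x - B x) \<le> A x - B x" using False t by (simp add: mult_left_le_one_le)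
    ultimately show ?thesis using False by (simp add: fil_angle_def algebra_simps)
  qed
  then show "min (A x) (B x) \<le> fil_angle x t" "fil_angle x t \<le> max (A x) (B x)" by auto
  then show "0 \<le> fil_angle x t" "fil_angle x t < 2 * pi" using r by auto
qed

lemma fil_eq_fil_iff:
  assumes x: "x \<in> X" and y: "y \<in> X" and s: "0 \<le> s" "s \<le> 1" and t: "0 \<le> t" "t \<le> 1"
  shows "fil x s = fil y t \<longleftrightarrow> fil_angle x s = fil_angle y t \<and> fil_radius x (fil_angle x s) = fil_radius y (fil_angle y t)"
proof
  assume e: "fil x s = fil y t"
  have r: "fil_radius x (fil_angle x s) = fil_radius y (fil_angle y t)"
    using norm_fil[OF x s] norm_fil[OF y t] e by simp
  have "fil_radius x (fil_angle x s) \<noteq> 0" using fil_radius_bounds(1)[OF x s] by simp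
  then have "cis (fil_angle x s) = cis (fil_angle y t)"
    using e r unfolding fil_def by simp
  then have "fil_angle x s = fil_angle y t"
    using Arg2pi_cis fil_angle_bounds(3,4)[OF x s] fil_angle_bounds(3,4)[OF y t] by metis
  then show "fil_angle x s = fil_angle y t \<and> fil_radius x (fil_angle x s) = fil_radius y (fil_angle y t)" using r by simp
next
  assume h: "fil_angle x s = fil_angle y t \<and> fil_radius x (fil_angle x s) = fil_radius y (fil_angle y t)"
  show "fil x s = fil y t" unfolding fil_def using h by metis
qed

lemma fil_inj:
  assumes x: "x \<in> X" and s: "0 \<le> s" "s \<le> 1" and t: "0 \<le> t" "t \<le> 1"
    and e: "fil x s = fil x t"
  shows "s = t"
proof -
  have "fil_angle x s = fil_angle x t" using fil_eq_fil_iff[OF x x s t] e by simp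
  then have "s * (B x - A x) = t * (B x - A x)" by (simp add: fil_angle_def)
  then show ?thesis using ends_neq[OF x] by simp
qed

lemma cross_fil_deriv:
  assumes "fil_angle x s = p" "fil_angle y t = p" "fil_radius x p = \<rho>" "fil_radius y p = \<rho>"
  shows "cross (fil_deriv x s) (fil_deriv y t) = (B x - A x) * (B y - A y) * \<rho> * (c y * bump_deriv A B y p - c x * bump_deriv A B x p)"
proof -
  have cc: "cnj (cis p) * cis p = 1" by (simp add: cis_cnj cis_mult)
  define a where "a = - c x * bump_deriv A B x p"
  define b where "b = - c y * bump_deriv A B y p"
  have "cnj (fil_deriv x s) * fil_deriv y t = complex_of_real ((B x - A x) * (B y - A y)) *
      (cnj (complex_of_real a + \<i> * complex_of_real \<rho>) * (complex_of_real b + \<i> * complex_of_real \<rho>)) * (cnj (cis p) * cis p)"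
    unfolding fil_deriv_def assms a_def b_def by (simp add: mult_ac)
  also have "\<dots> = complex_of_real ((B x - A x) * (B y - A y)) *
      (cnj (complex_of_real a + \<i> * complex_of_real \<rho>) * (complex_of_real b + \<i> * complex_of_real \<rho>))"
    using cc by simp
  finally have F: "cnj (fil_deriv x s) * fil_deriv y t = complex_of_real ((B x - A x) * (B y - A y)) *
      (cnj (complex_of_real a + \<i> * complex_of_real \<rho>) * (complex_of_real b + \<i> * complex_of_real \<rho>))" .
  have I: "Im (cnj (complex_of_real a + \<i> * complex_of_real \<rho>) * (complex_of_real b + \<i> * complex_of_real \<rho>)) = \<rho> * a - \<rho> * b"
    by (simp add: algebra_simps)
  have "cross (fil_deriv x s) (fil_deriv y t) = (B x - A x) * (B y - A y) * (\<rho> * a - \<rho> * b)"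
    unfolding cross_def F using I by simp
  then show ?thesis unfolding a_def b_def by (simp add: algebra_simps)
qed

lemma sgn_bump_difference_at_end:
  assumes x: "x \<in> X" and y: "y \<in> X" and xy: "x \<noteq> y"
    and e: "e = A x \<or> e = B x \<or> e = A y \<or> e = B y"
    and ex: "min (A x) (B x) \<le> e" "e \<le> max (A x) (B x)"
    and ey: "min (A y) (B y) \<le> e" "e \<le> max (A y) (B y)"
  shows "sgn (c y * bump A B y e - c x * bump A B x e) = (if e = A x \<or> e = B x then 1 else -1)"
proof -
  have d: "A x \<noteq> A y" "A x \<noteq> B y" "B x \<noteq> A y" "B x \<noteq> B y" "A x \<noteq> B x" "A y \<noteq> B y"
    using sepX x y xy unfolding separated_ends_def by auto
  have cx: "0 < c x" and cy: "0 < c y" using coeff_bounds x y by auto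
  show ?thesis
  proof (cases "e = A x \<or> e = B x")
    case True
    then have "e \<noteq> A y" "e \<noteq> B y" using d by auto
    then have "min (A y) (B y) < e" "e < max (A y) (B y)" using ey by (auto simp: min_def max_def)
    then have "0 < bump A B y e" by (rule bump_pos)
    moreover have "bump A B x e = 0" using True by (auto simp: bump_def)
    ultimately show ?thesis using True cy by simp
  next
    case False
    then have "e \<noteq> A x" "e \<noteq> B x" by auto
    then have "min (A x) (B x) < e" "e < max (A x) (B x)" using ex by (auto simp: min_def max_def)
    then have "0 < bump A B x e" by (rule bump_pos)
    then have p: "0 < c x * bump A B x e" using cx by simp
    have "bump A B y e = 0" using False e by (auto simp: bump_def)
    then have q: "c y * bump A B y e - c x * bump A B x e < 0" using p by simp
    then show ?thesis using False by (simp add: sgn_if)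
  qed
qed

lemma filament_arc_fil:
  assumes "x \<in> X"
  shows "filament_arc (fil x) (cis (A x)) (cis (B x))"
  unfolding filament_arc_def
proof (intro conjI ballI)
  show "fil x C1_differentiable_on {0..1}" by (rule fil_C1_differentiable)
  fix t :: real assume "t \<in> {0..1}"
  then show "dv (fil x) t \<noteq> 0" using dv_fil fil_deriv_nonzero assms by auto
next
  fix t :: real assume "t \<in> {0<..<1}"
  then show "norm (fil x t) < 1" using norm_fil fil_radius_bounds(3) assms by auto
qed (simp_all add: fil_at_0 fil_at_1)

lemma finite_meeting_angles:
  assumes "x \<in> X" "y \<in> X" "x \<noteq> y"
  shows "finite (meeting_angles x y)"
proof (rule finite_subset)
  show "meeting_angles x y \<subseteq> {t. c x * bump A B x t = c y * bump A B y t}"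
    by (auto simp: meeting_angles_def radius_gap_def)
  show "finite {t. c x * bump A B x t = c y * bump A B y t}"
    by (rule finite_bump_coincidences[OF sepX assms]) (use coeff_bounds assms in force)
qed

lemma radius_gap_deriv_nonzero:
  assumes "x \<in> X" "y \<in> X" "x \<noteq> y" "radius_gap x y \<phi> = 0"
  shows "radius_gap_deriv x y \<phi> \<noteq> 0"
  using genericX assms unfolding generic_coeffs_def no_tangencies_def radius_gap_def radius_gap_deriv_def by force

lemma has_real_derivative_radius_gap: "(radius_gap x y has_real_derivative radius_gap_deriv x y \<phi>) (at \<phi>)"
  unfolding radius_gap_def radius_gap_deriv_def bump_def bump_deriv_def
  by (auto intro!: derivative_eq_intros simp: algebra_simps)

lemma bij_betw_intersections_meeting_angles:
  assumes x: "x \<in> X" and y: "y \<in> X"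
  shows "bij_betw (\<lambda>(s, t). fil_angle x s)
    {(s, t). s \<in> {0..1} \<and> t \<in> {0..1} \<and> fil x s = fil y t} (meeting_angles x y)"
proof (rule bij_betw_byWitness[where f' = "\<lambda>\<phi>. ((\<phi> - A x) / (B x - A x), (\<phi> - A y) / (B y - A y))"])
  have dx: "B x - A x \<noteq> 0" and dy: "B y - A y \<noteq> 0" using ends_neq[OF x] ends_neq[OF y] by auto
  have meet: "fil_angle x s = fil_angle y t \<and> radius_gap x y (fil_angle x s) = 0"
    if "s \<in> {0..1}" "t \<in> {0..1}" "fil x s = fil y t" for s t
    using fil_eq_fil_iff[OF x y] that by (auto simp: radius_gap_def fil_radius_def)
  show "\<forall>a\<in>{(s, t). s \<in> {0..1} \<and> t \<in> {0..1} \<and> fil x s = fil y t}.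
      (\<lambda>\<phi>. ((\<phi> - A x) / (B x - A x), (\<phi> - A y) / (B y - A y))) ((\<lambda>(s, t). fil_angle x s) a) = a"
  proof
    fix a assume "a \<in> {(s, t). s \<in> {0..1} \<and> t \<in> {0..1} \<and> fil x s = fil y t}"
    then obtain s t where a: "a = (s, t)" "s \<in> {0..1}" "t \<in> {0..1}" "fil x s = fil y t" by auto
    then have "fil_angle x s - A y = t * (B y - A y)" using meet unfolding fil_angle_def by simp
    then have "(fil_angle x s - A y) / (B y - A y) = t" using dy by simp
    moreover have "(fil_angle x s - A x) / (B x - A x) = s" unfolding fil_angle_def using dx by simp
    ultimately show "(\<lambda>\<phi>. ((\<phi> - A x) / (B x - A x), (\<phi> - A y) / (B y - A y))) ((\<lambda>(s, t). fil_angle x s) a) = a"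
      using a(1) by simp
  qed
  show "\<forall>\<phi>\<in>meeting_angles x y. (\<lambda>(s, t). fil_angle x s)
      ((\<lambda>\<phi>. ((\<phi> - A x) / (B x - A x), (\<phi> - A y) / (B y - A y))) \<phi>) = \<phi>"
    using dx by (simp add: fil_angle_def)
  show "(\<lambda>(s, t). fil_angle x s) ` {(s, t). s \<in> {0..1} \<and> t \<in> {0..1} \<and> fil x s = fil y t} \<subseteq> meeting_angles x y"
  proof clarify
    fix s t :: real assume st: "s \<in> {0..1}" "t \<in> {0..1}" "fil x s = fil y t"
    then show "fil_angle x s \<in> meeting_angles x y"
      using meet[OF st] fil_angle_bounds(1,2)[of x s] fil_angle_bounds(1,2)[of y t] x y
      by (auto simp: meeting_angles_def angle_lo_def angle_hi_def)
  qed
  show "(\<lambda>\<phi>. ((\<phi> - A x) / (B x - A x), (\<phi> - A y) / (B y - A y))) ` meeting_angles x y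
      \<subseteq> {(s, t). s \<in> {0..1} \<and> t \<in> {0..1} \<and> fil x s = fil y t}"
  proof clarify
    fix \<phi> assume \<phi>: "\<phi> \<in> meeting_angles x y"
    define s where "s = (\<phi> - A x) / (B x - A x)"
    define t where "t = (\<phi> - A y) / (B y - A y)"
    have s: "fil_angle x s = \<phi>" "0 \<le> s" "s \<le> 1" and t: "fil_angle y t = \<phi>" "0 \<le> t" "t \<le> 1"
      using \<phi> dx dy unfolding s_def t_def fil_angle_def meeting_angles_def angle_lo_def angle_hi_def
      by (auto simp: divide_simps min_def max_def split: if_splits)
    have "fil x s = fil y t"
      using fil_eq_fil_iff[OF x y s(2,3) t(2,3)] s(1) t(1) \<phi>
      by (simp add: meeting_angles_def radius_gap_def fil_radius_def)
    then show "s \<in> {0..1} \<and> t \<in> {0..1} \<and> fil x s = fil y t" using s t by simp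
  qed
qed

lemma cross_dv_fil_at_intersection:
  assumes x: "x \<in> X" and y: "y \<in> X" and st: "s \<in> {0..1}" "t \<in> {0..1}" "fil x s = fil y t"
  shows "cross (dv (fil x) s) (dv (fil y) t)
    = (B x - A x) * (B y - A y) * fil_radius x (fil_angle x s) * radius_gap_deriv x y (fil_angle x s)"
proof -
  have "fil_angle x s = fil_angle y t" "fil_radius x (fil_angle x s) = fil_radius y (fil_angle y t)"
    using fil_eq_fil_iff[OF x y] st by auto
  moreover have "dv (fil x) s = fil_deriv x s" "dv (fil y) t = fil_deriv y t" using dv_fil st by auto
  ultimately show ?thesis
    unfolding radius_gap_deriv_def by (simp add: cross_fil_deriv)
qed

text \<open>The radius difference changes sign exactly at the meeting angles, all of them simple zeros;
  its signs at the ends of the common range of angles are known, since one of the two bumps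
  vanishes there.\<close>
lemma sum_sgn_radius_gap_deriv:
  assumes x: "x \<in> X" and y: "y \<in> X" and xy: "x \<noteq> y"
  defines "s \<equiv> \<lambda>e. if e = A x \<or> e = B x then 1 else - 1 :: real"
  shows "2 * (\<Sum>\<phi>\<in>meeting_angles x y. sgn (radius_gap_deriv x y \<phi>))
    = (if angle_lo x y < angle_hi x y then s (angle_hi x y) - s (angle_lo x y) else 0)"
proof (cases "angle_lo x y < angle_hi x y")
  case True
  let ?lo = "angle_lo x y" and ?hi = "angle_hi x y"
  have lo_e: "?lo = A x \<or> ?lo = B x \<or> ?lo = A y \<or> ?lo = B y" unfolding angle_lo_def by (auto simp: min_def max_def)
  have hi_e: "?hi = A x \<or> ?hi = B x \<or> ?hi = A y \<or> ?hi = B y" unfolding angle_hi_def by (auto simp: min_def max_def)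
  have slo: "sgn (radius_gap x y ?lo) = s ?lo" unfolding radius_gap_def s_def
    by (rule sgn_bump_difference_at_end[OF x y xy lo_e]) (use True in \<open>auto simp: angle_lo_def angle_hi_def\<close>)
  have shi: "sgn (radius_gap x y ?hi) = s ?hi" unfolding radius_gap_def s_def
    by (rule sgn_bump_difference_at_end[OF x y xy hi_e]) (use True in \<open>auto simp: angle_lo_def angle_hi_def\<close>)
  have "2 * (\<Sum>\<phi>\<in>meeting_angles x y. sgn (radius_gap_deriv x y \<phi>))
      = sgn (radius_gap x y ?hi) - sgn (radius_gap x y ?lo)"
    unfolding meeting_angles_def
  proof (rule sum_sgn_deriv_over_zeros[OF has_real_derivative_radius_gap True])
    show "radius_gap x y ?lo \<noteq> 0" using slo unfolding s_def by (auto split: if_splits)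
    show "radius_gap x y ?hi \<noteq> 0" using shi unfolding s_def by (auto split: if_splits)
    show "finite {\<phi> \<in> {?lo..?hi}. radius_gap x y \<phi> = 0}"
      using finite_meeting_angles[OF x y xy] unfolding meeting_angles_def .
    show "\<forall>\<phi>\<in>{?lo..?hi}. radius_gap x y \<phi> = 0 \<longrightarrow> radius_gap_deriv x y \<phi> \<noteq> 0"
      using radius_gap_deriv_nonzero[OF x y xy] by auto
  qed
  then show ?thesis using True slo shi by simp
next
  case False
  have "angle_lo x y \<noteq> angle_hi x y"
    using sepX x y xy unfolding separated_ends_def angle_lo_def angle_hi_def
    by (auto simp: min_def max_def split: if_splits)
  then have "meeting_angles x y = {}" using False by (auto simp: meeting_angles_def)
  then show ?thesis using False by simp
qed

lemma inum_fil:
  assumes x: "x \<in> X" and y: "y \<in> X" and xy: "x \<noteq> y"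
  shows "inum (fil x) (fil y) = arc_linking A B x y"
proof -
  define Z where "Z = {(s, t). s \<in> {0..1} \<and> t \<in> {0..1} \<and> fil x s = fil y t}"
  define D where "D = (B x - A x) * (B y - A y)"
  define h where "h = (\<lambda>\<phi>. if 0 < D * radius_gap_deriv x y \<phi> then 1 else (-1::int))"
  define s where "s = (\<lambda>e. if e = A x \<or> e = B x then 1 else - 1 :: real)"
  have d: "A x \<noteq> B x" "A y \<noteq> B y" "A x \<noteq> A y" "A x \<noteq> B y" "B x \<noteq> A y" "B x \<noteq> B y"
    using sepX x y xy unfolding separated_ends_def by auto
  then have "D \<noteq> 0" by (simp add: D_def)
  have sign: "(if 0 < cross (dv (fil x) s') (dv (fil y) t') then 1 else -1) = h (fil_angle x s')"
    if "(s', t') \<in> Z" for s' t'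
  proof -
    have r: "0 < fil_radius x (fil_angle x s')" using fil_radius_bounds(1)[OF x] that by (auto simp: Z_def)
    have "cross (dv (fil x) s') (dv (fil y) t')
        = (D * radius_gap_deriv x y (fil_angle x s')) * fil_radius x (fil_angle x s')"
      using cross_dv_fil_at_intersection[OF x y] that by (simp add: Z_def D_def mult_ac)
    then show ?thesis using r by (simp add: h_def zero_less_mult_iff)
  qed
  have "inum (fil x) (fil y) = (\<Sum>a\<in>Z. h ((\<lambda>(s, t). fil_angle x s) a))"
    unfolding inum_def Z_def[symmetric] by (rule sum.cong[OF refl]) (use sign in auto)
  also have "\<dots> = sum h (meeting_angles x y)"
    using sum.reindex_bij_betw[OF bij_betw_intersections_meeting_angles[OF x y], of h]
    unfolding Z_def .
  also have "real_of_int \<dots> = sgn D * (\<Sum>\<phi>\<in>meeting_angles x y. sgn (radius_gap_deriv x y \<phi>))"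
    unfolding of_int_sum sum_distrib_left
  proof (rule sum.cong[OF refl])
    fix \<phi> assume "\<phi> \<in> meeting_angles x y"
    then have "radius_gap_deriv x y \<phi> \<noteq> 0"
      using radius_gap_deriv_nonzero[OF x y xy] by (simp add: meeting_angles_def)
    then show "real_of_int (h \<phi>) = sgn D * sgn (radius_gap_deriv x y \<phi>)"
      using \<open>D \<noteq> 0\<close> by (auto simp: h_def sgn_if zero_less_mult_iff)
  qed
  finally have "2 * real_of_int (inum (fil x) (fil y))
      = sgn D * (2 * (\<Sum>\<phi>\<in>meeting_angles x y. sgn (radius_gap_deriv x y \<phi>)))"
    by simp
  also have "\<dots> = (if angle_lo x y < angle_hi x y then sgn D * (s (angle_hi x y) - s (angle_lo x y)) else 0)"
    unfolding sum_sgn_radius_gap_deriv[OF x y xy] s_def by simp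
  also have "\<dots> = 2 * real_of_int (arc_linking A B x y)"
    using interleaving_count[OF d] unfolding D_def s_def angle_lo_def angle_hi_def arc_linking_def
    by simp
  finally show ?thesis by simp
qed

lemma finite_fil_intersections:
  assumes "x \<in> X" "y \<in> X" "x \<noteq> y"
  shows "finite {(s, t). s \<in> {0..1::real} \<and> t \<in> {0..1::real} \<and> fil x s = fil y t}"
  using bij_betw_finite[OF bij_betw_intersections_meeting_angles[OF assms(1,2)]]
    finite_meeting_angles[OF assms] by simp

lemma pair_interaction_eq_linking:
  assumes x: "x \<in> X" and y: "y \<in> X"
  shows "(\<Sum>\<beta>\<in>{x, y}. \<Sum>\<gamma>\<in>X - {x, y}. inum (fil \<beta>) (fil \<gamma>))
    = (\<Sum>\<beta>\<in>{x, y}. \<Sum>\<gamma>\<in>X. arc_linking A B \<beta> \<gamma>)"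
proof -
  have "(\<Sum>\<beta>\<in>{x, y}. \<Sum>\<gamma>\<in>X - {x, y}. inum (fil \<beta>) (fil \<gamma>))
      = (\<Sum>\<beta>\<in>{x, y}. \<Sum>\<gamma>\<in>X - {x, y}. arc_linking A B \<beta> \<gamma>)"
    using x y inum_fil by (intro sum.cong refl) auto
  also have "\<dots> = (\<Sum>\<beta>\<in>{x, y}. \<Sum>\<gamma>\<in>X. arc_linking A B \<beta> \<gamma>)"
  proof (rule sum_pair_exterior)
    show "arc_linking A B x y + arc_linking A B y x = 0"
    proof (cases "x = y")
      case False
      then show ?thesis using sepX x y by (intro arc_linking_antisym) (auto simp: separated_ends_def)
    qed simp
  qed (use finX x y in auto)
  finally show ?thesis .
qed

definition fil_preimage :: "complex \<Rightarrow> (nat \<times> real) set" where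
  "fil_preimage p = {(i, t). i \<in> X \<and> t \<in> {0..1} \<and> fil i t = p}"

lemma inj_on_fst_fil_preimage: "inj_on fst (fil_preimage p)"
  unfolding fil_preimage_def inj_on_def using fil_inj by auto

lemma finite_fil_preimage: "finite (fil_preimage p)"
proof (rule finite_imageD[OF _ inj_on_fst_fil_preimage])
  show "finite (fst ` fil_preimage p)" by (rule finite_subset[OF _ finX]) (auto simp: fil_preimage_def)
qed

lemma card_fil_preimage_le_2: "card (fil_preimage p) \<le> 2"
proof (rule ccontr)
  assume "\<not> card (fil_preimage p) \<le> 2"
  then have "3 \<le> card (fst ` fil_preimage p)" using card_image[OF inj_on_fst_fil_preimage] by simp
  then obtain T where T: "T \<subseteq> fst ` fil_preimage p" "card T = 3" "finite T"
    by (rule obtain_subset_with_card_n)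
  from T(2) obtain i j k where "T = {i, j, k}" "i \<noteq> j" "j \<noteq> k" "i \<noteq> k"
    unfolding card_3_iff by blast
  then obtain si sj sk where ijk: "i \<noteq> j" "i \<noteq> k" "j \<noteq> k"
    and s: "(i, si) \<in> fil_preimage p" "(j, sj) \<in> fil_preimage p" "(k, sk) \<in> fil_preimage p"
    using T(1) by force
  then have X: "i \<in> X" "j \<in> X" "k \<in> X" and r: "0 \<le> si" "si \<le> 1" "0 \<le> sj" "sj \<le> 1" "0 \<le> sk" "sk \<le> 1"
    and g: "fil i si = p" "fil j sj = p" "fil k sk = p" unfolding fil_preimage_def by auto
  have "fil_angle i si = fil_angle j sj" "fil_radius i (fil_angle i si) = fil_radius j (fil_angle j sj)"
    "fil_angle i si = fil_angle k sk" "fil_radius i (fil_angle i si) = fil_radius k (fil_angle k sk)"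
    using fil_eq_fil_iff[OF X(1,2) r(1-4)] fil_eq_fil_iff[OF X(1,3) r(1,2,5,6)] g by auto
  then have "c i * bump A B i (fil_angle i si) = c j * bump A B j (fil_angle i si)"
    "c i * bump A B i (fil_angle i si) = c k * bump A B k (fil_angle i si)"
    unfolding fil_radius_def by simp_all
  then show False using genericX X ijk unfolding generic_coeffs_def no_triple_points_def by blast
qed

lemma finite_fil_double_points: "finite {p. 2 \<le> card (fil_preimage p) \<or> infinite (fil_preimage p)}"
proof (rule finite_subset)
  let ?D = "\<Union>i\<in>X. \<Union>j\<in>X - {i}. (\<lambda>(s, t). fil i s) ` {(s, t). s \<in> {0..1::real} \<and> t \<in> {0..1::real} \<and> fil i s = fil j t}"
  show "finite ?D" using finite_fil_intersections finX by auto
  show "{p. 2 \<le> card (fil_preimage p) \<or> infinite (fil_preimage p)} \<subseteq> ?D"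
  proof
    fix p assume "p \<in> {p. 2 \<le> card (fil_preimage p) \<or> infinite (fil_preimage p)}"
    then have "\<not> card (fil_preimage p) \<le> Suc 0" using finite_fil_preimage by auto
    then obtain i s j t where ab: "(i, s) \<in> fil_preimage p" "(j, t) \<in> fil_preimage p" "(i, s) \<noteq> (j, t)"
      using card_le_Suc0_iff_eq[OF finite_fil_preimage] by fastforce
    then have X: "i \<in> X" "j \<in> X" and r: "0 \<le> s" "s \<le> 1" "0 \<le> t" "t \<le> 1"
      and g: "fil i s = p" "fil j t = p" unfolding fil_preimage_def by auto
    have "i \<noteq> j" using fil_inj[OF X(1) r] g ab(3) by auto
    then show "p \<in> ?D"
      using X r g by (intro UN_I[of i] UN_I[of j]) (auto intro!: image_eqI[of _ _ "(s, t)"])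
  qed
qed

lemma cross_dv_fil_nonzero:
  assumes "i \<in> X" "j \<in> X" "s \<in> {0..1}" "t \<in> {0..1}" "(i, s) \<noteq> (j, t)" "fil i s = fil j t"
  shows "cross (dv (fil i) s) (dv (fil j) t) \<noteq> 0"
proof -
  have r: "0 \<le> s" "s \<le> 1" "0 \<le> t" "t \<le> 1" using assms(3,4) by auto
  have ij: "i \<noteq> j" using fil_inj[OF assms(1) r] assms(5,6) by auto
  have "fil_angle i s = fil_angle j t" "fil_radius i (fil_angle i s) = fil_radius j (fil_angle j t)"
    using fil_eq_fil_iff[OF assms(1,2) r] assms(6) by auto
  then have "radius_gap i j (fil_angle i s) = 0" by (simp add: radius_gap_def fil_radius_def)
  then have "radius_gap_deriv i j (fil_angle i s) \<noteq> 0"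
    by (rule radius_gap_deriv_nonzero[OF assms(1,2) ij])
  moreover have "B i - A i \<noteq> 0" "B j - A j \<noteq> 0" using ends_neq[OF assms(1)] ends_neq[OF assms(2)] by auto
  moreover have "fil_radius i (fil_angle i s) \<noteq> 0" using fil_radius_bounds(1)[OF assms(1) r(1,2)] by simp
  ultimately show ?thesis by (simp add: cross_dv_fil_at_intersection[OF assms(1-4,6)])
qed

lemma general_position_fil: "general_position X fil"
  unfolding general_position_def fil_preimage_def[symmetric]
  using finite_fil_double_points finite_fil_preimage card_fil_preimage_le_2 cross_dv_fil_nonzero
  by blast

end

section \<open>Construction of the filamentation\<close>

lemma arc_linking_strict_mono:
  assumes "strict_mono f"
  shows "arc_linking (f \<circ> a) (f \<circ> b) u v = arc_linking a b u v"
  using in_arc_strict_mono[OF assms] by (simp add: arc_linking_def)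

lemma sum_arc_linking_positions:
  assumes wf: "wf_ocd w" and p: "bij_betw p (chords w) (chords w)" and u: "u \<in> chords w"
  shows "(\<Sum>v\<in>chords w. arc_linking (\<lambda>x. position w (p x, False)) (\<lambda>x. position w (x, True)) u v)
    = - (sign_partial_sum w (position w (u, True)) - sign_partial_sum w (position w (p u, False)) + 1)"
proof -
  have dist: "distinct w" using wf by (simp add: wf_ocd_def)
  have "p u \<in> chords w" using p u by (auto simp: bij_betw_def)
  then have a: "position w (p u, False) < length w" "w ! position w (p u, False) = (p u, False)"
    and b: "position w (u, True) < length w" "w ! position w (u, True) = (u, True)"
    using position_props[OF dist] wf_ocd_endpoint_in_set[OF wf] u by auto
  then have "position w (p u, False) \<noteq> position w (u, True)" by auto
  then show ?thesis
    using sum_endpoints_in_arc[OF wf p] sum_signs_in_arc[OF wf a(1) b(1)] a(2)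
    by (simp add: arc_linking_def)
qed

lemma sum_arc_linking_pair:
  assumes wf: "wf_ocd w" and x: "x \<in> chords w"
    and p: "\<And>x. x \<in> chords w \<Longrightarrow> p x \<in> chords w" "\<And>x. x \<in> chords w \<Longrightarrow> p (p x) = x"
    and opp: "chord_index w (p x) = - chord_index w x"
  shows "(\<Sum>\<beta>\<in>{x, p x}. \<Sum>\<gamma>\<in>chords w. arc_linking (\<lambda>x. position w (p x, False)) (\<lambda>x. position w (x, True)) \<beta> \<gamma>) = 0"
proof -
  have bij: "bij_betw p (chords w) (chords w)"
    by (rule bij_betw_byWitness[where f' = p]) (use p in auto)
  note row = sum_arc_linking_positions[OF wf bij]
  show ?thesis
  proof (cases "p x = x")
    case True
    then show ?thesis using row[OF x] opp chord_index_eq_partial_sums[OF wf x] by simp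
  next
    case False
    then show ?thesis
      using row[OF x] row[OF p(1)[OF x]] p(2)[OF x] opp
        chord_index_eq_partial_sums[OF wf x] chord_index_eq_partial_sums[OF wf p(1)[OF x]]
      by simp
  qed
qed

definition circle_angle :: "nat \<Rightarrow> nat \<Rightarrow> real" where
  "circle_angle n k = 2 * pi * real k / real n"

lemma strict_mono_circle_angle: "0 < n \<Longrightarrow> strict_mono (circle_angle n)"
  by (auto simp: strict_mono_def circle_angle_def divide_strict_right_mono)

lemma circle_angle_bounds: "k < n \<Longrightarrow> 0 \<le> circle_angle n k \<and> circle_angle n k < 2 * pi"
  by (simp add: circle_angle_def field_simps)

lemma ep_pos_eq_circle_angle: "ep_pos w e = cis (circle_angle (length w) (position w e))"
  by (simp add: ep_pos_def position_def circle_angle_def)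

lemma separated_ends_positions:
  assumes wf: "wf_ocd w"
    and p: "\<And>x. x \<in> chords w \<Longrightarrow> p x \<in> chords w" "\<And>x. x \<in> chords w \<Longrightarrow> p (p x) = x"
  shows "separated_ends (chords w) (\<lambda>x. circle_angle (length w) (position w (p x, False)))
    (\<lambda>x. circle_angle (length w) (position w (x, True)))"
proof -
  have dist: "distinct w" using wf by (simp add: wf_ocd_def)
  have angle_eq_iff: "circle_angle (length w) (position w (c, b)) = circle_angle (length w) (position w (c', b'))
      \<longleftrightarrow> c = c' \<and> b = b'" if "c \<in> chords w" "c' \<in> chords w" for c c' b b'
  proof -
    have e: "(c, b) \<in> set w" "(c', b') \<in> set w" using wf_ocd_endpoint_in_set[OF wf] that by auto
    then have "0 < length w" by (cases w) auto
    then have "circle_angle (length w) (position w (c, b)) = circle_angle (length w) (position w (c', b'))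
        \<longleftrightarrow> position w (c, b) = position w (c', b')"
      by (intro strict_mono_eq strict_mono_circle_angle)
    also have "\<dots> \<longleftrightarrow> (c, b) = (c', b')"
      using position_props(2)[OF dist e(1)] position_props(2)[OF dist e(2)] by metis
    finally show ?thesis by simp
  qed
  show ?thesis
    unfolding separated_ends_def
  proof (intro conjI ballI impI)
    fix x assume x: "x \<in> chords w"
    show "circle_angle (length w) (position w (p x, False)) \<noteq> circle_angle (length w) (position w (x, True))"
      using angle_eq_iff[OF p(1)[OF x] x] by simp
    fix y assume y: "y \<in> chords w" and xy: "x \<noteq> y"
    show "circle_angle (length w) (position w (p x, False)) \<noteq> circle_angle (length w) (position w (p y, False))"
      using angle_eq_iff[OF p(1)[OF x] p(1)[OF y]] p(2)[OF x] p(2)[OF y] xy by auto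
    show "circle_angle (length w) (position w (p x, False)) \<noteq> circle_angle (length w) (position w (y, True))"
      using angle_eq_iff[OF p(1)[OF x] y] by simp
    show "circle_angle (length w) (position w (x, True)) \<noteq> circle_angle (length w) (position w (p y, False))"
      using angle_eq_iff[OF x p(1)[OF y]] by simp
    show "circle_angle (length w) (position w (x, True)) \<noteq> circle_angle (length w) (position w (y, True))"
      using angle_eq_iff[OF x y] xy by simp
  qed
qed

lemma symmetric_indices_admits_filamentation:
  assumes wf: "wf_ocd w" and sym: "symmetric_indices w"
  shows "admits_filamentation w"
proof -
  let ?X = "chords w" and ?n = "length w"
  obtain p where p: "\<And>x. x \<in> ?X \<Longrightarrow> p x \<in> ?X" "\<And>x. x \<in> ?X \<Longrightarrow> p (p x) = x"
    and opp: "\<And>x. x \<in> ?X \<Longrightarrow> chord_index w (p x) = - chord_index w x"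
    using opposite_pairing_exists[OF finite_chords sym] by metis
  define a where "a = (\<lambda>x. position w (p x, False))"
  define b where "b = (\<lambda>x. position w (x, True))"
  define A where "A = circle_angle ?n \<circ> a"
  define B where "B = circle_angle ?n \<circ> b"
  have ab: "a x < ?n" "b x < ?n" if "x \<in> ?X" for x
    using position_props(1) wf_ocd_endpoint_in_set[OF wf] p(1) that wf
    unfolding a_def b_def wf_ocd_def by auto
  have sep: "separated_ends ?X A B"
    using separated_ends_positions[OF wf p] by (simp add: A_def B_def a_def b_def comp_def)
  obtain c where c: "generic_coeffs ?X A B c" using generic_coeffs_exist[OF finite_chords sep] by blast
  interpret filament_family ?X A B c
    by unfold_locales (use sep c circle_angle_bounds ab in \<open>auto simp: A_def B_def\<close>)
  have "is_filamentation w p fil"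
    unfolding is_filamentation_def
  proof (intro conjI ballI)
    show "is_pairing ?X p" using p by (simp add: is_pairing_def)
    show "general_position ?X fil" by (rule general_position_fil)
  next
    fix x assume "x \<in> ?X"
    then show "filament_arc (fil x) (ep_pos w (p x, False)) (ep_pos w (x, True))"
      using filament_arc_fil by (simp add: ep_pos_eq_circle_angle A_def B_def a_def b_def)
  next
    fix x assume x: "x \<in> ?X"
    have "(\<Sum>\<beta>\<in>{x, p x}. \<Sum>\<gamma>\<in>?X - {x, p x}. inum (fil \<beta>) (fil \<gamma>))
        = (\<Sum>\<beta>\<in>{x, p x}. \<Sum>\<gamma>\<in>?X. arc_linking A B \<beta> \<gamma>)"
      by (rule pair_interaction_eq_linking[OF x p(1)[OF x]])
    also have "\<dots> = 0"
    proof -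
      have "0 < ?n" using wf_ocd_endpoint_in_set[OF wf x] by (cases w) auto
      then have "arc_linking A B \<beta> \<gamma> = arc_linking a b \<beta> \<gamma>" for \<beta> \<gamma>
        unfolding A_def B_def by (intro arc_linking_strict_mono strict_mono_circle_angle)
      then show ?thesis using sum_arc_linking_pair[OF wf x p opp[OF x]] by (simp add: a_def b_def)
    qed
    finally show "(\<Sum>\<beta>\<in>{x, p x}. \<Sum>\<gamma>\<in>?X - {x, p x}. inum (fil \<beta>) (fil \<gamma>)) = 0" .
  qed
  then show ?thesis unfolding admits_filamentation_def by blast
qed

theorem theorem5:
  fixes w :: ocd
  assumes "wf_ocd w"
    and "\<not> admits_filamentation w"
  shows "\<not> flat_equiv w []"
  using assms flat_equiv_Nil_symmetric_indices symmetric_indices_admits_filamentation by blast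

end
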